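(* Let $W_0,W_1,W_2,W_3$ be discretely $\mathbb{R}$-graded $V$-modules, each satisfying the $C_1$-cofiniteness condition, and let $T$, $J$, $F_r(T)$, $F_r(J)$ be as in the context. Then there exists $M\in\mathbb{Z}$ such that for every $r\in\mathbb{R}$, $$F_r(T)\subset F_r(J)+F_M(T).$$ In particular $T=J+F_M(T)$.
   Context: Let $V=\coprod_{n\in\mathbb{Z}}V_{(n)}$ be a vertex operator algebra (in the sense of Frenkel–Lepowsky–Meurman and Frenkel–Huang–Lepowsky), with vacuum $\mathbf{1}$ and Virasoro operators $L(n)$, and let $V_+=\coprod_{n>0}V_{(n)}$. For a $V$-module $W$ write $Y(u,x)=\sum_{n\in\mathbb{Z}}u_nx^{-n-1}$. Let $C_1(W)$ be the subspace of $W$ spanned by all $u_{-1}w$ with $u\in V_+$, $w\in W$; $W$ is called $C_1$-cofinite if $\dim W/C_1(W)<\infty$. A discretely $\mathbb{R}$-graded $V$-module is a $V$-module graded by $L(0)$-eigenvalues (weights) in $\mathbb{R}$ such that for every $r\in\mathbb{R}$ the sum of its homogeneous subspaces of weight $\le r$ is finite-dimensional. $W'$ denotes the contragredient module of $W$; for $u\in V$, $n\in\mathbb{Z}$, $u^*_n:W\to W$ denotes the adjoint of $u_n:W'\to W'$ (so $\mathrm{wt}\,u^*_n=-\mathrm{wt}\,u+n+1$). Let $R=\mathbb{C}[z_1^{\pm1},z_2^{\pm1},(z_1-z_2)^{-1}]$ and $T=R\otimes W_0\otimes W_1\otimes W_2\otimes W_3$ (an $R$-module; write $f(z_1,z_2)w_0\otimes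 w_1\otimes w_2\otimes w_3$ for $f\otimes w_0\otimes\cdots\otimes w_3$). Let $J\subset T$ be the $R$-submodule generated by all elements, for $u\in V_+$, $w_i\in W_i$, $\mathcal{A}=\sum_{k\ge0}\binom{-1}{k}(-z_1)^k u^*_{-1-k}w_0\otimes w_1\otimes w_2\otimes w_3-w_0\otimes u_{-1}w_1\otimes w_2\otimes w_3-\sum_{k\ge0}\binom{-1}{k}(-(z_1-z_2))^{-1-k}w_0\otimes w_1\otimes u_kw_2\otimes w_3-\sum_{k\ge0}\binom{-1}{k}(-z_1)^{-1-k}w_0\otimes w_1\otimes w_2\otimes u_kw_3$; $\mathcal{B}=\sum_{k\ge0}\binom{-1}{k}(-z_2)^k u^*_{-1-k}w_0\otimes w_1\otimes w_2\otimes w_3-\sum_{k\ge0}\binom{-1}{k}(z_1-z_2)^{-1-k}w_0\otimes u_kw_1\otimes w_2\otimes w_3-w_0\otimes w_1\otimes u_{-1}w_2\otimes w_3-\sum_{k\ge0}\binom{-1}{k}(-z_2)^{-1-k}w_0\otimes w_1\otimes w_2\otimes u_kw_3$; $\mathcal{C}=u^*_{-1}w_0\otimes w_1\otimes w_2\otimes w_3-\sum_{k\ge0}\binom{-1}{k}z_1^{-1-k}w_0\otimes u_kw_1\otimes w_2\otimes w_3-\sum_{k\ge0}\binom{-1}{k}z_2^{-1-k}w_0\otimes w_1\otimes u_kw_2\otimes w_3-w_0\otimes w_1\otimes w_2\otimes u_{-1}w_3$; $\mathcal{D}=u_{-1}w_0\otimes w_1\otimes w_2\otimes w_3-\sum_{k\ge0}\binom{-1}{k}z_1^{1+k}w_0\otimes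 e^{z_1^{-1}L(1)}(-z_1^2)^{L(0)}u_k(-z_1^{-2})^{L(0)}e^{-z_1^{-1}L(1)}w_1\otimes w_2\otimes w_3-\sum_{k\ge0}\binom{-1}{k}z_2^{1+k}w_0\otimes w_1\otimes e^{z_2^{-1}L(1)}(-z_2^2)^{L(0)}u_k(-z_2^{-2})^{L(0)}e^{-z_2^{-1}L(1)}w_2\otimes w_3-w_0\otimes w_1\otimes w_2\otimes u^*_{-1}w_3$. Grade $T$ by declaring $f(z_1,z_2)w_0\otimes w_1\otimes w_2\otimes w_3$ (with $f\in R$, $w_i$ homogeneous) to have weight $\mathrm{wt}\,w_0+\mathrm{wt}\,w_1+\mathrm{wt}\,w_2+\mathrm{wt}\,w_3$ (elements of $R$ have weight $0$); let $T_{(r)}$ be the weight-$r$ subspace, $F_r(T)=\coprod_{s\le r}T_{(s)}$ and $F_r(J)=J\cap F_r(T)$. *)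

theory Defs
  imports Complex_Main "HOL-Library.Function_Algebras"
begin

text \<open>Sum of a family with finite support (used for the formally infinite sums
that are finite because of truncation conditions).\<close>
definition fsum :: "('i \<Rightarrow> 'a::comm_monoid_add) \<Rightarrow> 'a" where
  "fsum f = sum f {i. f i \<noteq> 0}"

definition graded_decomp :: "(complex \<Rightarrow> 'a \<Rightarrow> 'a::ab_group_add) \<Rightarrow> ('i \<Rightarrow> 'a set) \<Rightarrow> bool" where
  "graded_decomp sc G \<longleftrightarrow> (\<forall>i. module.subspace sc (G i)) \<and>
     (\<forall>v. \<exists>!c. finite {i. c i \<noteq> 0} \<and> (\<forall>i. c i \<in> G i) \<and> v = sum c {i. c i \<noteq> 0})"

definition grcomp :: "('i \<Rightarrow> 'a set) \<Rightarrow> 'a::ab_group_add \<Rightarrow> 'i \<Rightarrow> 'a" where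
  "grcomp G v = (THE c. finite {i. c i \<noteq> 0} \<and> (\<forall>i. c i \<in> G i) \<and> v = sum c {i. c i \<noteq> 0})"

definition findim :: "(complex \<Rightarrow> 'a \<Rightarrow> 'a::ab_group_add) \<Rightarrow> 'a set \<Rightarrow> bool" where
  "findim sc S \<longleftrightarrow> (\<exists>B. finite B \<and> S \<subseteq> module.span sc B)"

text \<open>Data of a VOA: scalar multiplication, vertex operator (Y u n v = u_n v),
vacuum and conformal vector.\<close>
record 'v voa =
  vsc :: "complex \<Rightarrow> 'v \<Rightarrow> 'v"
  vY :: "'v \<Rightarrow> int \<Rightarrow> 'v \<Rightarrow> 'v"
  vac :: 'v
  omega :: 'v

definition vL :: "'v voa \<Rightarrow> int \<Rightarrow> 'v \<Rightarrow> 'v" where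
  "vL V n = vY V (omega V) (n + 1)"

definition Vgr :: "'v::ab_group_add voa \<Rightarrow> int \<Rightarrow> 'v set" where
  "Vgr V n = {v. vL V 0 v = vsc V (of_int n) v}"

definition Vplus :: "'v::ab_group_add voa \<Rightarrow> 'v set" where
  "Vplus V = module.span (vsc V) (\<Union>n\<in>{n. n > 0}. Vgr V n)"

definition is_VOA :: "'v::ab_group_add voa \<Rightarrow> bool" where
  "is_VOA V \<longleftrightarrow>
    vector_space (vsc V) \<and>
    (\<forall>n v. Vector_Spaces.linear (vsc V) (vsc V) (\<lambda>u. vY V u n v)) \<and>
    (\<forall>u n. Vector_Spaces.linear (vsc V) (vsc V) (vY V u n)) \<and>
    (\<forall>u v. \<exists>N. \<forall>n\<ge>N. vY V u n v = 0) \<and>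
    (\<forall>n v. vY V (vac V) n v = (if n = -1 then v else 0)) \<and>
    (\<forall>u n. n \<ge> 0 \<longrightarrow> vY V u n (vac V) = 0) \<and>
    (\<forall>u. vY V u (-1) (vac V) = u) \<and>
    (\<forall>u v w l m n.
       fsum (\<lambda>i::nat. vsc V (of_int m gchoose i) (vY V (vY V u (l + int i) v) (m + n - int i) w)) =
       fsum (\<lambda>i::nat. vsc V ((-1) ^ i * (of_int l gchoose i))
          (vY V u (m + l - int i) (vY V v (n + int i) w)
           - vsc V ((-1) powi l) (vY V v (l + n - int i) (vY V u (m + int i) w))))) \<and>
    (\<exists>c::complex. \<forall>m n v. vL V m (vL V n v) - vL V n (vL V m v) =
        vsc V (of_int (m - n)) (vL V (m + n) v)
        + (if m + n = 0 then vsc V ((of_int m ^ 3 - of_int m) / 12 * c) v else 0)) \<and>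
    (\<forall>u n v. vY V (vL V (-1) u) n v = vsc V (- of_int n) (vY V u (n - 1) v)) \<and>
    omega V \<in> Vgr V 2 \<and>
    graded_decomp (vsc V) (Vgr V) \<and>
    (\<forall>n. findim (vsc V) (Vgr V n)) \<and>
    (\<exists>N. \<forall>n<N. Vgr V n = {0})"

record ('v, 'w) vmod =
  msc :: "complex \<Rightarrow> 'w \<Rightarrow> 'w"
  mY :: "'v \<Rightarrow> int \<Rightarrow> 'w \<Rightarrow> 'w"

definition mL :: "'v voa \<Rightarrow> ('v, 'w) vmod \<Rightarrow> int \<Rightarrow> 'w \<Rightarrow> 'w" where
  "mL V W n = mY W (omega V) (n + 1)"

definition Wgr :: "'v voa \<Rightarrow> ('v, 'w::ab_group_add) vmod \<Rightarrow> real \<Rightarrow> 'w set" where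
  "Wgr V W r = {w. mL V W 0 w = msc W (of_real r) w}"

definition is_disc_module :: "'v::ab_group_add voa \<Rightarrow> ('v, 'w::ab_group_add) vmod \<Rightarrow> bool" where
  "is_disc_module V W \<longleftrightarrow>
    vector_space (msc W) \<and>
    (\<forall>n w. Vector_Spaces.linear (vsc V) (msc W) (\<lambda>u. mY W u n w)) \<and>
    (\<forall>u n. Vector_Spaces.linear (msc W) (msc W) (mY W u n)) \<and>
    (\<forall>u w. \<exists>N. \<forall>n\<ge>N. mY W u n w = 0) \<and>
    (\<forall>n w. mY W (vac V) n w = (if n = -1 then w else 0)) \<and>
    (\<forall>u v w l m n.
       fsum (\<lambda>i::nat. msc W (of_int m gchoose i) (mY W (vY V u (l + int i) v) (m + n - int i) w)) =
       fsum (\<lambda>i::nat. msc W ((-1) ^ i * (of_int l gchoose i))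
          (mY W u (m + l - int i) (mY W v (n + int i) w)
           - msc W ((-1) powi l) (mY W v (l + n - int i) (mY W u (m + int i) w))))) \<and>
    (\<forall>u n w. mY W (vL V (-1) u) n w = msc W (- of_int n) (mY W u (n - 1) w)) \<and>
    graded_decomp (msc W) (Wgr V W) \<and>
    (\<forall>r. findim (msc W) (module.span (msc W) (\<Union>s\<in>{s. s \<le> r}. Wgr V W s)))"

definition C1 :: "'v::ab_group_add voa \<Rightarrow> ('v, 'w::ab_group_add) vmod \<Rightarrow> 'w set" where
  "C1 V W = module.span (msc W) {mY W u (-1) w | u w. u \<in> Vplus V}"

definition C1_cofinite :: "'v::ab_group_add voa \<Rightarrow> ('v, 'w::ab_group_add) vmod \<Rightarrow> bool" where
  "C1_cofinite V W \<longleftrightarrow> (\<exists>B. finite B \<and> module.span (msc W) (B \<union> C1 V W) = UNIV)"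

text \<open>u^*_n : W \<rightarrow> W, the adjoint of the contragredient operator u_n on W'.
By definition of the contragredient module (FHL),
 <Y'(u,x)w',w> = <w', Y(e^{x L(1)} (-x^{-2})^{L(0)} u, x^{-1}) w>,
so for u homogeneous of weight m the adjoint of u'_n is
 (-1)^m \<Sum>_j (1/j!) (L(1)^j u)_{2m-j-n-2};
for general u one sums over homogeneous components.\<close>
definition ustar :: "'v::ab_group_add voa \<Rightarrow> ('v, 'w::ab_group_add) vmod \<Rightarrow> 'v \<Rightarrow> int \<Rightarrow> 'w \<Rightarrow> 'w" where
  "ustar V W u n w = fsum (\<lambda>m::int. msc W ((-1) powi m)
      (fsum (\<lambda>j::nat. msc W (1 / fact j)
         (mY W ((vL V 1 ^^ j) (grcomp (Vgr V) u m)) (2 * m - int j - n - 2) w))))"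

text \<open>Concrete model of the tensor product: the pure tensor f \<otimes> w0 \<otimes> w1 \<otimes> w2 \<otimes> w3
is represented by the function
 ((z1,z2),\<phi>0,\<phi>1,\<phi>2,\<phi>3) \<mapsto> f(z1,z2) \<phi>0(w0) \<phi>1(w1) \<phi>2(w2) \<phi>3(w3)
on {z1 \<noteq> 0, z2 \<noteq> 0, z1 \<noteq> z2} \<times> W0^* \<times> ... \<times> W3^* (algebraic duals), extended by 0.
This map from the algebraic tensor product is injective, so T is the span of these.\<close>

type_synonym ('a, 'b, 'c, 'd) tpt =
  "(complex \<times> complex) \<times> ('a \<Rightarrow> complex) \<times> ('b \<Rightarrow> complex) \<times> ('c \<Rightarrow> complex) \<times> ('d \<Rightarrow> complex)"

type_synonym ('a, 'b, 'c, 'd) tel = "('a, 'b, 'c, 'd) tpt \<Rightarrow> complex"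

definition ten ::
  "('v, 'a::ab_group_add) vmod \<Rightarrow> ('v, 'b::ab_group_add) vmod \<Rightarrow> ('v, 'c::ab_group_add) vmod \<Rightarrow> ('v, 'd::ab_group_add) vmod \<Rightarrow>
   (complex \<Rightarrow> complex \<Rightarrow> complex) \<Rightarrow> 'a \<Rightarrow> 'b \<Rightarrow> 'c \<Rightarrow> 'd \<Rightarrow> ('a, 'b, 'c, 'd) tel" where
  "ten W0 W1 W2 W3 f w0 w1 w2 w3 = (\<lambda>((z1, z2), \<phi>0, \<phi>1, \<phi>2, \<phi>3).
     if z1 \<noteq> 0 \<and> z2 \<noteq> 0 \<and> z1 \<noteq> z2 \<and>
        Vector_Spaces.linear (msc W0) (*) \<phi>0 \<and> Vector_Spaces.linear (msc W1) (*) \<phi>1 \<and>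
        Vector_Spaces.linear (msc W2) (*) \<phi>2 \<and> Vector_Spaces.linear (msc W3) (*) \<phi>3
     then f z1 z2 * \<phi>0 w0 * \<phi>1 w1 * \<phi>2 w2 * \<phi>3 w3 else 0)"

definition scT :: "complex \<Rightarrow> ('a, 'b, 'c, 'd) tel \<Rightarrow> ('a, 'b, 'c, 'd) tel" where
  "scT c t = (\<lambda>p. c * t p)"

text \<open>Monomials z1^a z2^b (z1-z2)^c spanning R = C[z1^{\<pm>1}, z2^{\<pm>1}, (z1-z2)^{-1}].\<close>
definition Rmon :: "int \<Rightarrow> int \<Rightarrow> int \<Rightarrow> complex \<Rightarrow> complex \<Rightarrow> complex" where
  "Rmon a b c = (\<lambda>z1 z2. z1 powi a * z2 powi b * (z1 - z2) powi c)"

definition Rmul :: "int \<Rightarrow> int \<Rightarrow> int \<Rightarrow> ('a, 'b, 'c, 'd) tel \<Rightarrow> ('a, 'b, 'c, 'd) tel" where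
  "Rmul a b c t = (\<lambda>((z1, z2), \<phi>s). Rmon a b c z1 z2 * t ((z1, z2), \<phi>s))"

definition Tsp :: "('v, 'a::ab_group_add) vmod \<Rightarrow> ('v, 'b::ab_group_add) vmod \<Rightarrow> ('v, 'c::ab_group_add) vmod \<Rightarrow> ('v, 'd::ab_group_add) vmod \<Rightarrow>
   ('a, 'b, 'c, 'd) tel set" where
  "Tsp W0 W1 W2 W3 = module.span scT
     {ten W0 W1 W2 W3 (Rmon a b c) w0 w1 w2 w3 | a b c w0 w1 w2 w3. True}"

definition FT :: "'v::ab_group_add voa \<Rightarrow> ('v, 'a::ab_group_add) vmod \<Rightarrow> ('v, 'b::ab_group_add) vmod \<Rightarrow>
   ('v, 'c::ab_group_add) vmod \<Rightarrow> ('v, 'd::ab_group_add) vmod \<Rightarrow> real \<Rightarrow> ('a, 'b, 'c, 'd) tel set" where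
  "FT V W0 W1 W2 W3 r = module.span scT
     {ten W0 W1 W2 W3 (Rmon a b c) w0 w1 w2 w3 | a b c w0 w1 w2 w3 r0 r1 r2 r3.
        w0 \<in> Wgr V W0 r0 \<and> w1 \<in> Wgr V W1 r1 \<and> w2 \<in> Wgr V W2 r2 \<and> w3 \<in> Wgr V W3 r3 \<and>
        r0 + r1 + r2 + r3 \<le> r}"

text \<open>The operator e^{z^{-1}L(1)} (-z^2)^{L(0)} u_k (-z^{-2})^{L(0)} e^{-z^{-1}L(1)} applied to w,
multiplied by the coefficient (-1 choose k) z^{1+k}, as an element of R \<otimes> W (placed in slot 1 or 2).
Here (-z^2)^{L(0)} u_k (-z^{-2})^{L(0)} = (-z^2)^{wt u_k} u_k = (-z^2)^{m-k-1} u_k for u of weight m.\<close>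
definition Dterm1 :: "'v::ab_group_add voa \<Rightarrow> ('v, 'a::ab_group_add) vmod \<Rightarrow> ('v, 'b::ab_group_add) vmod \<Rightarrow>
   ('v, 'c::ab_group_add) vmod \<Rightarrow> ('v, 'd::ab_group_add) vmod \<Rightarrow> 'v \<Rightarrow> 'a \<Rightarrow> 'b \<Rightarrow> 'c \<Rightarrow> 'd \<Rightarrow> ('a, 'b, 'c, 'd) tel" where
  "Dterm1 V W0 W1 W2 W3 u w0 w1 w2 w3 =
     fsum (\<lambda>k::nat. fsum (\<lambda>m::int. fsum (\<lambda>i::nat. fsum (\<lambda>j::nat.
       ten W0 W1 W2 W3
         (\<lambda>z1 z2. ((-1) gchoose k) * z1 ^ (1 + k) * (- (z1 ^ 2)) powi (m - int k - 1)
                    * (z1 powi (- int i) / fact i) * ((- z1) powi (- int j) / fact j))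
         w0 ((mL V W1 1 ^^ i) (mY W1 (grcomp (Vgr V) u m) (int k) ((mL V W1 1 ^^ j) w1))) w2 w3))))"

definition Dterm2 :: "'v::ab_group_add voa \<Rightarrow> ('v, 'a::ab_group_add) vmod \<Rightarrow> ('v, 'b::ab_group_add) vmod \<Rightarrow>
   ('v, 'c::ab_group_add) vmod \<Rightarrow> ('v, 'd::ab_group_add) vmod \<Rightarrow> 'v \<Rightarrow> 'a \<Rightarrow> 'b \<Rightarrow> 'c \<Rightarrow> 'd \<Rightarrow> ('a, 'b, 'c, 'd) tel" where
  "Dterm2 V W0 W1 W2 W3 u w0 w1 w2 w3 =
     fsum (\<lambda>k::nat. fsum (\<lambda>m::int. fsum (\<lambda>i::nat. fsum (\<lambda>j::nat.
       ten W0 W1 W2 W3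
         (\<lambda>z1 z2. ((-1) gchoose k) * z2 ^ (1 + k) * (- (z2 ^ 2)) powi (m - int k - 1)
                    * (z2 powi (- int i) / fact i) * ((- z2) powi (- int j) / fact j))
         w0 w1 ((mL V W2 1 ^^ i) (mY W2 (grcomp (Vgr V) u m) (int k) ((mL V W2 1 ^^ j) w2))) w3))))"

definition genA :: "'v::ab_group_add voa \<Rightarrow> ('v, 'a::ab_group_add) vmod \<Rightarrow> ('v, 'b::ab_group_add) vmod \<Rightarrow>
   ('v, 'c::ab_group_add) vmod \<Rightarrow> ('v, 'd::ab_group_add) vmod \<Rightarrow> 'v \<Rightarrow> 'a \<Rightarrow> 'b \<Rightarrow> 'c \<Rightarrow> 'd \<Rightarrow> ('a, 'b, 'c, 'd) tel" where
  "genA V W0 W1 W2 W3 u w0 w1 w2 w3 =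
     fsum (\<lambda>k::nat. ten W0 W1 W2 W3 (\<lambda>z1 z2. ((-1) gchoose k) * (- z1) ^ k)
                       (ustar V W0 u (-1 - int k) w0) w1 w2 w3)
     - ten W0 W1 W2 W3 (\<lambda>z1 z2. 1) w0 (mY W1 u (-1) w1) w2 w3
     - fsum (\<lambda>k::nat. ten W0 W1 W2 W3 (\<lambda>z1 z2. ((-1) gchoose k) * (- (z1 - z2)) powi (-1 - int k))
                       w0 w1 (mY W2 u (int k) w2) w3)
     - fsum (\<lambda>k::nat. ten W0 W1 W2 W3 (\<lambda>z1 z2. ((-1) gchoose k) * (- z1) powi (-1 - int k))
                       w0 w1 w2 (mY W3 u (int k) w3))"

definition genB :: "'v::ab_group_add voa \<Rightarrow> ('v, 'a::ab_group_add) vmod \<Rightarrow> ('v, 'b::ab_group_add) vmod \<Rightarrow>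
   ('v, 'c::ab_group_add) vmod \<Rightarrow> ('v, 'd::ab_group_add) vmod \<Rightarrow> 'v \<Rightarrow> 'a \<Rightarrow> 'b \<Rightarrow> 'c \<Rightarrow> 'd \<Rightarrow> ('a, 'b, 'c, 'd) tel" where
  "genB V W0 W1 W2 W3 u w0 w1 w2 w3 =
     fsum (\<lambda>k::nat. ten W0 W1 W2 W3 (\<lambda>z1 z2. ((-1) gchoose k) * (- z2) ^ k)
                       (ustar V W0 u (-1 - int k) w0) w1 w2 w3)
     - fsum (\<lambda>k::nat. ten W0 W1 W2 W3 (\<lambda>z1 z2. ((-1) gchoose k) * (z1 - z2) powi (-1 - int k))
                       w0 (mY W1 u (int k) w1) w2 w3)
     - ten W0 W1 W2 W3 (\<lambda>z1 z2. 1) w0 w1 (mY W2 u (-1) w2) w3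
     - fsum (\<lambda>k::nat. ten W0 W1 W2 W3 (\<lambda>z1 z2. ((-1) gchoose k) * (- z2) powi (-1 - int k))
                       w0 w1 w2 (mY W3 u (int k) w3))"

definition genC :: "'v::ab_group_add voa \<Rightarrow> ('v, 'a::ab_group_add) vmod \<Rightarrow> ('v, 'b::ab_group_add) vmod \<Rightarrow>
   ('v, 'c::ab_group_add) vmod \<Rightarrow> ('v, 'd::ab_group_add) vmod \<Rightarrow> 'v \<Rightarrow> 'a \<Rightarrow> 'b \<Rightarrow> 'c \<Rightarrow> 'd \<Rightarrow> ('a, 'b, 'c, 'd) tel" where
  "genC V W0 W1 W2 W3 u w0 w1 w2 w3 =
     ten W0 W1 W2 W3 (\<lambda>z1 z2. 1) (ustar V W0 u (-1) w0) w1 w2 w3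
     - fsum (\<lambda>k::nat. ten W0 W1 W2 W3 (\<lambda>z1 z2. ((-1) gchoose k) * z1 powi (-1 - int k))
                       w0 (mY W1 u (int k) w1) w2 w3)
     - fsum (\<lambda>k::nat. ten W0 W1 W2 W3 (\<lambda>z1 z2. ((-1) gchoose k) * z2 powi (-1 - int k))
                       w0 w1 (mY W2 u (int k) w2) w3)
     - ten W0 W1 W2 W3 (\<lambda>z1 z2. 1) w0 w1 w2 (mY W3 u (-1) w3)"

definition genD :: "'v::ab_group_add voa \<Rightarrow> ('v, 'a::ab_group_add) vmod \<Rightarrow> ('v, 'b::ab_group_add) vmod \<Rightarrow>
   ('v, 'c::ab_group_add) vmod \<Rightarrow> ('v, 'd::ab_group_add) vmod \<Rightarrow> 'v \<Rightarrow> 'a \<Rightarrow> 'b \<Rightarrow> 'c \<Rightarrow> 'd \<Rightarrow> ('a, 'b, 'c, 'd) tel" where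
  "genD V W0 W1 W2 W3 u w0 w1 w2 w3 =
     ten W0 W1 W2 W3 (\<lambda>z1 z2. 1) (mY W0 u (-1) w0) w1 w2 w3
     - Dterm1 V W0 W1 W2 W3 u w0 w1 w2 w3
     - Dterm2 V W0 W1 W2 W3 u w0 w1 w2 w3
     - ten W0 W1 W2 W3 (\<lambda>z1 z2. 1) w0 w1 w2 (ustar V W3 u (-1) w3)"

definition gens :: "'v::ab_group_add voa \<Rightarrow> ('v, 'a::ab_group_add) vmod \<Rightarrow> ('v, 'b::ab_group_add) vmod \<Rightarrow>
   ('v, 'c::ab_group_add) vmod \<Rightarrow> ('v, 'd::ab_group_add) vmod \<Rightarrow> ('a, 'b, 'c, 'd) tel set" where
  "gens V W0 W1 W2 W3 =
     {g V W0 W1 W2 W3 u w0 w1 w2 w3 | g u w0 w1 w2 w3.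
        g \<in> {genA, genB, genC, genD} \<and> u \<in> Vplus V}"

text \<open>J: the R-submodule of T generated by the generators, i.e. the complex span of
all products (monomial in R) \<cdot> generator.\<close>
definition Jsp :: "'v::ab_group_add voa \<Rightarrow> ('v, 'a::ab_group_add) vmod \<Rightarrow> ('v, 'b::ab_group_add) vmod \<Rightarrow>
   ('v, 'c::ab_group_add) vmod \<Rightarrow> ('v, 'd::ab_group_add) vmod \<Rightarrow> ('a, 'b, 'c, 'd) tel set" where
  "Jsp V W0 W1 W2 W3 = module.span scT
     {Rmul a b c g | a b c g. g \<in> gens V W0 W1 W2 W3}"

definition setplus :: "'a::plus set \<Rightarrow> 'a set \<Rightarrow> 'a set" where
  "setplus A B = {x + y | x y. x \<in> A \<and> y \<in> B}"

end

theory Submission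
  imports Defs
begin

text \<open>By C1-cofiniteness, every homogeneous vector of W_i whose weight s exceeds some bound M_i
is a combination of vectors u_{-1} w with u \<in> V_(p), p > 0, and w of weight s - p. Fix an integer
M \<ge> M_0 + M_1 + M_2 + M_3. A homogeneous pure tensor of weight \<rho> > M has some factor of weight
above its bound; expanding that factor in this way, the generator A, B, C or D carrying u_{-1} in the
corresponding slot shows that the tensor is congruent modulo J to a combination of tensors of weight
at most \<rho> - 1, since u_k (k \<ge> 0) raises weights by at most p - 1 and u^*_{-1-k} lowers them by
p + k. Induction on the weight in steps of 1 finishes the argument.\<close>

lemmas linear_map_add = module_hom.add[OF module_hom_linearI]
  and linear_map_scale = module_hom.scale[OF module_hom_linearI]
  and linear_map_zero = module_hom.zero[OF module_hom_linearI]

lemma fsum_eq_sum: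
  assumes "finite A" and "\<And>i. i \<notin> A \<Longrightarrow> f i = 0"
  shows "fsum f = sum f A"
  unfolding fsum_def by (rule sum.mono_neutral_left) (use assms in auto)

lemma (in module) fsum_in_subspace:
  assumes "subspace S" and "\<And>i. f i \<in> S"
  shows "fsum f \<in> S"
  unfolding fsum_def
  using assms by (cases "finite {i. f i \<noteq> 0}") (auto intro: subspace_sum subspace_0)

lemma (in module) subspace_setplus:
  assumes A: "subspace A" and B: "subspace B"
  shows "subspace (setplus A B)"
  unfolding subspace_def setplus_def
proof (intro conjI ballI allI)
  show "0 \<in> {x + y |x y. x \<in> A \<and> y \<in> B}"
    using subspace_0[OF A] subspace_0[OF B] by force
next
  fix x y assume "x \<in> {x + y |x y. x \<in> A \<and> y \<in> B}" "y \<in> {x + y |x y. x \<in> A \<and> y \<in> B}"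
  then obtain a b a' b' where "x = a + b" "y = a' + b'" "a \<in> A" "b \<in> B" "a' \<in> A" "b' \<in> B"
    by blast
  then show "x + y \<in> {x + y |x y. x \<in> A \<and> y \<in> B}"
    using subspace_add[OF A] subspace_add[OF B]
    by (intro CollectI exI[of _ "a + a'"] exI[of _ "b + b'"]) (simp add: algebra_simps)
next
  fix c x assume "x \<in> {x + y |x y. x \<in> A \<and> y \<in> B}"
  then obtain a b where "x = a + b" "a \<in> A" "b \<in> B" by blast
  then show "c *s x \<in> {x + y |x y. x \<in> A \<and> y \<in> B}"
    using subspace_scale[OF A] subspace_scale[OF B]
    by (intro CollectI exI[of _ "c *s a"] exI[of _ "c *s b"]) (simp add: scale_right_distrib)
qed

lemma module_hom_span_in_subspace:
  assumes f: "module_hom s1 s2 f" and Z: "module.subspace s2 Z"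
    and X: "\<And>x. x \<in> X \<Longrightarrow> f x \<in> Z" and x: "x \<in> module.span s1 X"
  shows "f x \<in> Z"
proof -
  have "module.span s2 (f ` X) \<subseteq> Z"
    using X by (intro module.span_minimal[OF module_hom.axioms(2)[OF f] _ Z]) blast
  then show ?thesis using x module_hom.span_image[OF f] by blast
qed

lemma real_step_induct:
  fixes P :: "real \<Rightarrow> bool"
  assumes base: "\<And>r. r \<le> r\<^sub>0 \<Longrightarrow> P r"
    and step: "\<And>r. (\<And>r'. r' \<le> r - 1 \<Longrightarrow> P r') \<Longrightarrow> P r"
  shows "P r"
proof -
  have "\<forall>r. r \<le> r\<^sub>0 + real n \<longrightarrow> P r" for n :: nat
  proof (induction n)
    case 0
    then show ?case using base by simp
  next
    case (Suc n)
    then show ?case by (auto intro: step)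
  qed
  moreover have "r \<le> r\<^sub>0 + real (nat \<lceil>r - r\<^sub>0\<rceil>)" by linarith
  ultimately show ?thesis by blast
qed

lemma gbinomial_one_left_eq_0: "i \<noteq> 0 \<Longrightarrow> i \<noteq> 1 \<Longrightarrow> ((1::complex) gchoose i) = 0"
  using binomial_gbinomial[of 1 i, where 'a=complex] by (simp add: binomial_eq_0)

section \<open>Graded decompositions\<close>

lemma grcomp_spec:
  assumes "graded_decomp sc G"
  shows "finite {i. grcomp G v i \<noteq> 0}" and "grcomp G v i \<in> G i"
    and "v = sum (grcomp G v) {i. grcomp G v i \<noteq> 0}"
proof -
  from assms have "\<exists>!c. finite {i. c i \<noteq> 0} \<and> (\<forall>i. c i \<in> G i) \<and> v = sum c {i. c i \<noteq> 0}"
    unfolding graded_decomp_def by blast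
  then have "finite {i. grcomp G v i \<noteq> 0} \<and> (\<forall>i. grcomp G v i \<in> G i) \<and>
      v = sum (grcomp G v) {i. grcomp G v i \<noteq> 0}"
    unfolding grcomp_def by (rule theI')
  then show "finite {i. grcomp G v i \<noteq> 0}" and "grcomp G v i \<in> G i"
    and "v = sum (grcomp G v) {i. grcomp G v i \<noteq> 0}"
    by blast+
qed

lemma graded_decomp_subspace: "graded_decomp sc G \<Longrightarrow> module.subspace sc (G i)"
  unfolding graded_decomp_def by blast

lemma grcomp_eqI:
  assumes G: "graded_decomp sc G" and A: "finite A"
    and c: "\<And>i. c i \<in> G i" "\<And>i. i \<notin> A \<Longrightarrow> c i = 0"
  shows "grcomp G (sum c A) = c"
proof -
  from G have ex: "\<exists>!c'. finite {i. c' i \<noteq> 0} \<and> (\<forall>i. c' i \<in> G i) \<and> sum c A = sum c' {i. c' i \<noteq> 0}"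
    unfolding graded_decomp_def by blast
  have supp: "{i. c i \<noteq> 0} \<subseteq> A" using c(2) by auto
  have "sum c A = sum c {i. c i \<noteq> 0}"
    by (rule sum.mono_neutral_right[OF A supp]) auto
  with c(1) finite_subset[OF supp A]
  have "finite {i. c i \<noteq> 0} \<and> (\<forall>i. c i \<in> G i) \<and> sum c A = sum c {i. c i \<noteq> 0}"
    by blast
  then show ?thesis unfolding grcomp_def using the1_equality[OF ex] by blast
qed

context
  fixes sc :: "complex \<Rightarrow> 'a::ab_group_add \<Rightarrow> 'a"
  assumes module: "module sc"
begin

interpretation module sc by (rule module)

lemma grcomp_homogeneous:
  assumes G: "graded_decomp sc G" and x: "x \<in> G s"
  shows "grcomp G x = (\<lambda>i. if i = s then x else 0)"
  using grcomp_eqI[OF G, of "{s}" "\<lambda>i. if i = s then x else 0"] x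
    subspace_0[OF graded_decomp_subspace[OF G]]
  by simp

lemma grcomp_add:
  assumes G: "graded_decomp sc G"
  shows "grcomp G (x + y) = (\<lambda>i. grcomp G x i + grcomp G y i)"
proof -
  let ?A = "{i. grcomp G x i \<noteq> 0} \<union> {i. grcomp G y i \<noteq> 0}"
  have A: "finite ?A" using grcomp_spec(1)[OF G] by blast
  have "x = sum (grcomp G x) ?A" "y = sum (grcomp G y) ?A"
    by (subst grcomp_spec(3)[OF G], rule sum.mono_neutral_left[OF A]; auto)+
  then have "x + y = sum (\<lambda>i. grcomp G x i + grcomp G y i) ?A"
    by (simp add: sum.distrib)
  also have "grcomp G \<dots> = (\<lambda>i. grcomp G x i + grcomp G y i)"
    by (rule grcomp_eqI[OF G A])
       (auto intro: subspace_add[OF graded_decomp_subspace[OF G]] grcomp_spec(2)[OF G])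
  finally show ?thesis .
qed

lemma grcomp_scale:
  assumes G: "graded_decomp sc G"
  shows "grcomp G (sc a x) = (\<lambda>i. sc a (grcomp G x i))"
proof -
  let ?A = "{i. grcomp G x i \<noteq> 0}"
  have A: "finite ?A" using grcomp_spec(1)[OF G] .
  have "sc a x = sum (\<lambda>i. sc a (grcomp G x i)) ?A"
    by (subst grcomp_spec(3)[OF G]) (rule scale_sum_right)
  also have "grcomp G \<dots> = (\<lambda>i. sc a (grcomp G x i))"
    by (rule grcomp_eqI[OF G A])
       (auto intro: subspace_scale[OF graded_decomp_subspace[OF G]] grcomp_spec(2)[OF G])
  finally show ?thesis .
qed

lemma graded_decomp_span:
  assumes G: "graded_decomp sc G"
  shows "x \<in> span (\<Union>i. G i)"
  by (subst grcomp_spec(3)[OF G], rule span_sum) (auto intro: span_base grcomp_spec(2)[OF G])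

end

section \<open>Vertex operator algebras and their modules\<close>

lemma is_VOA_module: "is_VOA V \<Longrightarrow> module (vsc V)"
  unfolding is_VOA_def module_iff_vector_space by blast

lemma is_VOA_linear_op: "is_VOA V \<Longrightarrow> Vector_Spaces.linear (vsc V) (vsc V) (vY V u n)"
proof -
  assume "is_VOA V"
  then have "\<forall>u n. Vector_Spaces.linear (vsc V) (vsc V) (vY V u n)"
    unfolding is_VOA_def by (elim conjE) assumption
  then show ?thesis by blast
qed

lemma is_VOA_graded: "is_VOA V \<Longrightarrow> graded_decomp (vsc V) (Vgr V)"
  unfolding is_VOA_def by blast

lemma is_VOA_Virasoro: "is_VOA V \<Longrightarrow> \<exists>c::complex. \<forall>m n v.
    vL V m (vL V n v) - vL V n (vL V m v) = vsc V (of_int (m - n)) (vL V (m + n) v)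
      + (if m + n = 0 then vsc V ((of_int m ^ 3 - of_int m) / 12 * c) v else 0)"
  unfolding is_VOA_def by blast

lemma is_VOA_omega: "is_VOA V \<Longrightarrow> omega V \<in> Vgr V 2"
  unfolding is_VOA_def by blast

lemma is_disc_module_module: "is_disc_module V W \<Longrightarrow> module (msc W)"
  unfolding is_disc_module_def module_iff_vector_space by blast

lemma is_disc_module_linear_vertex:
  "is_disc_module V W \<Longrightarrow> Vector_Spaces.linear (vsc V) (msc W) (\<lambda>u. mY W u n w)"
  unfolding is_disc_module_def by blast

lemma is_disc_module_linear_op: "is_disc_module V W \<Longrightarrow> Vector_Spaces.linear (msc W) (msc W) (mY W u n)"
  unfolding is_disc_module_def by blast

lemma is_disc_module_graded: "is_disc_module V W \<Longrightarrow> graded_decomp (msc W) (Wgr V W)"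
  unfolding is_disc_module_def by blast

lemma is_disc_module_L_minus_1:
  "is_disc_module V W \<Longrightarrow> mY W (vL V (-1) u) n w = msc W (- of_int n) (mY W u (n - 1) w)"
  unfolding is_disc_module_def by blast

lemma is_disc_module_Jacobi: "is_disc_module V W \<Longrightarrow>
    fsum (\<lambda>i::nat. msc W (of_int m gchoose i) (mY W (vY V u (l + int i) v) (m + n - int i) w)) =
    fsum (\<lambda>i::nat. msc W ((-1) ^ i * (of_int l gchoose i))
      (mY W u (m + l - int i) (mY W v (n + int i) w)
       - msc W ((-1) powi l) (mY W v (l + n - int i) (mY W u (m + int i) w))))"
  unfolding is_disc_module_def by blast

lemma Vgr_subspace: "is_VOA V \<Longrightarrow> module.subspace (vsc V) (Vgr V n)"
  by (rule graded_decomp_subspace[OF is_VOA_graded])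

lemma Wgr_subspace: "is_disc_module V W \<Longrightarrow> module.subspace (msc W) (Wgr V W r)"
  by (rule graded_decomp_subspace[OF is_disc_module_graded])

lemma zero_in_Vgr: "is_VOA V \<Longrightarrow> 0 \<in> Vgr V n"
  by (rule module.subspace_0[OF is_VOA_module Vgr_subspace])

lemma zero_in_Wgr: "is_disc_module V W \<Longrightarrow> 0 \<in> Wgr V W r"
  by (rule module.subspace_0[OF is_disc_module_module Wgr_subspace])

lemma in_span_homogeneous: "is_disc_module V W \<Longrightarrow> x \<in> module.span (msc W) (\<Union>s. Wgr V W s)"
  by (rule graded_decomp_span[OF is_disc_module_module is_disc_module_graded])

lemma Vgr_subset_Vplus: "is_VOA V \<Longrightarrow> p > 0 \<Longrightarrow> Vgr V p \<subseteq> Vplus V"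
  unfolding Vplus_def by (auto intro: module.span_base[OF is_VOA_module])

text \<open>The Jacobi identity with u = omega, l = 0, m = 1 is the commutator formula
[L(0), v_n] = (wt v - n - 1) v_n.\<close>
lemma weight_mY:
  assumes V: "is_VOA V" and W: "is_disc_module V W"
    and v: "v \<in> Vgr V p" and w: "w \<in> Wgr V W s"
  shows "mY W v n w \<in> Wgr V W (s + of_int p - of_int n - 1)"
proof -
  interpret m: module "msc W" using is_disc_module_module[OF W] .
  let ?Y = "mY W v n w" and ?w = "omega V"
  have jacobi: "fsum (\<lambda>i::nat. msc W (of_int 1 gchoose i) (mY W (vY V ?w (0 + int i) v) (1 + n - int i) w)) =
       fsum (\<lambda>i::nat. msc W ((-1) ^ i * (of_int 0 gchoose i))
          (mY W ?w (1 + 0 - int i) (mY W v (n + int i) w)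
           - msc W ((-1) powi 0) (mY W v (0 + n - int i) (mY W ?w (1 + int i) w))))"
    by (rule is_disc_module_Jacobi[OF W])
  have "fsum (\<lambda>i::nat. msc W (of_int 1 gchoose i) (mY W (vY V ?w (0 + int i) v) (1 + n - int i) w))
      = mY W (vY V ?w 0 v) (1 + n) w + mY W (vY V ?w 1 v) n w"
    by (subst fsum_eq_sum[of "{0,1}"]) (auto simp: gbinomial_one_left_eq_0)
  moreover have "fsum (\<lambda>i::nat. msc W ((-1) ^ i * (of_int 0 gchoose i))
          (mY W ?w (1 + 0 - int i) (mY W v (n + int i) w)
           - msc W ((-1) powi 0) (mY W v (0 + n - int i) (mY W ?w (1 + int i) w))))
      = mY W ?w 1 ?Y - mY W v n (mY W ?w 1 w)"
    by (subst fsum_eq_sum[of "{0}"]) (auto simp: gbinomial_0_left)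
  ultimately have "mY W (vY V ?w 0 v) (1 + n) w + mY W (vY V ?w 1 v) n w
      = mY W ?w 1 ?Y - mY W v n (mY W ?w 1 w)"
    using jacobi by simp
  moreover have "mY W (vY V ?w 0 v) (1 + n) w = msc W (- of_int (1 + n)) ?Y"
    using is_disc_module_L_minus_1[OF W, of v "1 + n" w] by (simp add: vL_def)
  moreover have "mY W (vY V ?w 1 v) n w = msc W (of_int p) ?Y"
    using v linear_map_scale[OF is_disc_module_linear_vertex[OF W]]
    by (simp add: Vgr_def vL_def)
  moreover have "mY W v n (mY W ?w 1 w) = msc W (of_real s) ?Y"
    using w linear_map_scale[OF is_disc_module_linear_op[OF W]]
    by (simp add: Wgr_def mL_def)
  ultimately have "mY W ?w 1 ?Y = msc W (- of_int (1 + n) + of_int p + of_real s) ?Y"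
    by (simp add: m.scale_left_distrib algebra_simps)
  also have "- of_int (1 + n) + of_int p + of_real s = complex_of_real (s + of_int p - of_int n - 1)"
    by simp
  finally show ?thesis by (simp add: Wgr_def mL_def)
qed

lemma weight_vL1:
  assumes V: "is_VOA V" and x: "x \<in> Vgr V m"
  shows "vL V 1 x \<in> Vgr V (m - 1)"
proof -
  interpret m: module "vsc V" using is_VOA_module[OF V] .
  obtain c where vir: "\<forall>m n v. vL V m (vL V n v) - vL V n (vL V m v) = vsc V (of_int (m - n)) (vL V (m + n) v)
      + (if m + n = 0 then vsc V ((of_int m ^ 3 - of_int m) / 12 * c) v else 0)"
    using is_VOA_Virasoro[OF V] by blast
  have "vL V 0 (vL V 1 x) - vL V 1 (vL V 0 x) = vsc V (-1) (vL V 1 x)"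
    using vir[rule_format, of 0 1 x] by simp
  moreover have "vL V 1 (vL V 0 x) = vsc V (of_int m) (vL V 1 x)"
    using x linear_map_scale[OF is_VOA_linear_op[OF V]] by (simp add: Vgr_def vL_def)
  ultimately have "vL V 0 (vL V 1 x) = vsc V (of_int m + -1) (vL V 1 x)"
    by (simp add: m.scale_left_distrib algebra_simps)
  then show ?thesis by (simp add: Vgr_def)
qed

lemma weight_vL1_pow:
  assumes V: "is_VOA V" and x: "x \<in> Vgr V m"
  shows "(vL V 1 ^^ j) x \<in> Vgr V (m - int j)"
proof (induction j)
  case 0
  then show ?case using x by simp
next
  case (Suc j)
  then show ?case using weight_vL1[OF V Suc] by (simp add: algebra_simps)
qed

lemma vL1_pow_zero: "is_VOA V \<Longrightarrow> (vL V 1 ^^ j) 0 = 0"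
  by (induction j) (simp_all add: vL_def linear_map_zero[OF is_VOA_linear_op])

lemma weight_mL1:
  assumes V: "is_VOA V" and W: "is_disc_module V W" and y: "y \<in> Wgr V W t"
  shows "mL V W 1 y \<in> Wgr V W (t - 1)"
  unfolding mL_def using weight_mY[OF V W is_VOA_omega[OF V] y, of 2] by (simp add: algebra_simps)

lemma weight_mL1_pow:
  assumes V: "is_VOA V" and W: "is_disc_module V W" and y: "y \<in> Wgr V W t"
  shows "(mL V W 1 ^^ i) y \<in> Wgr V W (t - real i)"
proof (induction i)
  case 0
  then show ?case using y by simp
next
  case (Suc i)
  then show ?case using weight_mL1[OF V W Suc] by (simp add: algebra_simps)
qed

lemma grcomp_Vgr:
  assumes V: "is_VOA V" and u: "u \<in> Vgr V p"
  shows "grcomp (Vgr V) u m = (if m = p then u else 0)"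
  using grcomp_homogeneous[OF is_VOA_module[OF V] is_VOA_graded[OF V] u] by simp

lemma weight_mY_grcomp:
  assumes V: "is_VOA V" and W: "is_disc_module V W" and u: "u \<in> Vgr V p" and y: "y \<in> Wgr V W t"
  shows "mY W (grcomp (Vgr V) u m) k y \<in> Wgr V W (t + of_int p - of_int k - 1)"
  using weight_mY[OF V W _ y] u zero_in_Vgr[OF V] by (simp add: grcomp_Vgr[OF V u])

lemma weight_ustar:
  assumes V: "is_VOA V" and W: "is_disc_module V W" and u: "u \<in> Vgr V p" and w: "w \<in> Wgr V W s"
  shows "ustar V W u n w \<in> Wgr V W (s - of_int p + of_int n + 1)"
  unfolding ustar_def
proof (intro module.fsum_in_subspace[OF is_disc_module_module[OF W] Wgr_subspace[OF W]]
    module.subspace_scale[OF is_disc_module_module[OF W] Wgr_subspace[OF W]])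
  fix m :: int and j :: nat
  show "mY W ((vL V 1 ^^ j) (grcomp (Vgr V) u m)) (2 * m - int j - n - 2) w
      \<in> Wgr V W (s - of_int p + of_int n + 1)"
  proof (cases "m = p")
    case True
    with weight_mY[OF V W weight_vL1_pow[OF V u] w, of j "2 * p - int j - n - 2"]
    show ?thesis by (simp add: grcomp_Vgr[OF V u] algebra_simps)
  next
    case False
    then show ?thesis
      by (simp add: grcomp_Vgr[OF V u] vL1_pow_zero[OF V]
          linear_map_zero[OF is_disc_module_linear_vertex[OF W]] zero_in_Wgr[OF W])
  qed
qed

section \<open>C1-cofiniteness\<close>

definition C1_component :: "'v::ab_group_add voa \<Rightarrow> ('v, 'w::ab_group_add) vmod \<Rightarrow> real \<Rightarrow> 'w set" where
  "C1_component V W s = module.span (msc W)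
     {mY W u (-1) w | u w p. p > 0 \<and> u \<in> Vgr V p \<and> w \<in> Wgr V W (s - of_int p)}"

lemma subspace_components_in_C1:
  assumes W: "is_disc_module V W"
  shows "module.subspace (msc W) {x. \<forall>s\<in>S. grcomp (Wgr V W) x s \<in> C1_component V W s}"
proof -
  interpret m: module "msc W" using is_disc_module_module[OF W] .
  have "grcomp (Wgr V W) 0 = (\<lambda>i. 0)"
    using grcomp_homogeneous[OF m.module_axioms is_disc_module_graded[OF W] zero_in_Wgr[OF W]]
    by simp
  then show ?thesis
    unfolding m.subspace_def C1_component_def
    by (auto simp: grcomp_add[OF m.module_axioms is_disc_module_graded[OF W]]
        grcomp_scale[OF m.module_axioms is_disc_module_graded[OF W]]
        intro: m.span_zero m.span_add m.span_scale)
qed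

lemma components_mY_minus_1_in_C1:
  assumes V: "is_VOA V" and W: "is_disc_module V W" and u: "u \<in> Vplus V"
  shows "grcomp (Wgr V W) (mY W u (-1) w) s \<in> C1_component V W s"
proof -
  interpret m: module "msc W" using is_disc_module_module[OF W] .
  let ?Q = "{x. \<forall>s\<in>UNIV. grcomp (Wgr V W) x s \<in> C1_component V W s}"
  have Q: "m.subspace ?Q" by (rule subspace_components_in_C1[OF W])
  have homogeneous: "mY W u (-1) w \<in> ?Q" if u: "u \<in> Vgr V p" "p > 0" for u p w
  proof (rule module_hom_span_in_subspace[OF module_hom_linearI[OF is_disc_module_linear_op[OF W]] Q _
        in_span_homogeneous[OF W]])
    fix x assume "x \<in> (\<Union>t. Wgr V W t)"
    then obtain t where x: "x \<in> Wgr V W t" by blast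
    have "mY W u (-1) x \<in> Wgr V W (t + of_int p)"
      using weight_mY[OF V W u(1) x, of "-1"] by simp
    moreover have "mY W u (-1) x \<in> C1_component V W (t + of_int p)"
      unfolding C1_component_def using u x by (intro m.span_base) force
    ultimately show "mY W u (-1) x \<in> ?Q"
      by (simp add: grcomp_homogeneous[OF m.module_axioms is_disc_module_graded[OF W]]
          C1_component_def m.span_zero)
  qed
  have "mY W u (-1) w \<in> ?Q"
    using u unfolding Vplus_def
    by (rule module_hom_span_in_subspace[OF module_hom_linearI[OF is_disc_module_linear_vertex[OF W]] Q,
          rotated]) (use homogeneous in blast)
  then show ?thesis by simp
qed

lemma C1_cofinite_high_weights:
  assumes V: "is_VOA V" and W: "is_disc_module V W" and C: "C1_cofinite V W"
  obtains M :: real where "\<And>s. s > M \<Longrightarrow> Wgr V W s \<subseteq> C1_component V W s"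
proof -
  interpret m: module "msc W" using is_disc_module_module[OF W] .
  have graded: "graded_decomp (msc W) (Wgr V W)" by (rule is_disc_module_graded[OF W])
  obtain B where B: "finite B" and spans: "m.span (B \<union> C1 V W) = UNIV"
    using C unfolding C1_cofinite_def by blast
  define M where "M = Max (insert 0 (\<Union>b\<in>B. {i. grcomp (Wgr V W) b i \<noteq> 0}))"
  have M: "grcomp (Wgr V W) b s = 0" if "b \<in> B" "s > M" for b s
  proof (rule ccontr)
    assume "grcomp (Wgr V W) b s \<noteq> 0"
    then have "s \<le> M"
      unfolding M_def using that(1) B grcomp_spec(1)[OF graded] by (intro Max_ge) auto
    with that(2) show False by simp
  qed
  let ?Q = "{x. \<forall>s\<in>{s. s > M}. grcomp (Wgr V W) x s \<in> C1_component V W s}"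
  have Q: "m.subspace ?Q" by (rule subspace_components_in_C1[OF W])
  have "B \<subseteq> ?Q" using M by (auto simp: C1_component_def m.span_zero)
  moreover have "C1 V W \<subseteq> ?Q"
    unfolding C1_def
    by (rule m.span_minimal[OF _ Q]) (auto intro: components_mY_minus_1_in_C1[OF V W])
  ultimately have "m.span (B \<union> C1 V W) \<subseteq> ?Q"
    by (intro m.span_minimal[OF _ Q]) auto
  then have all: "w \<in> ?Q" for w using spans by auto
  show ?thesis
  proof (intro that[of M] subsetI)
    fix s x assume "M < s" and "x \<in> Wgr V W s"
    then show "x \<in> C1_component V W s"
      using all[of x] by (force simp: grcomp_homogeneous[OF m.module_axioms graded])
  qed
qed

text \<open>Only values on the domain of R matter, as ten ignores its coefficient function elsewhere.\<close>
definition R_monomial :: "(complex \<Rightarrow> complex \<Rightarrow> complex) \<Rightarrow> bool" where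
  "R_monomial f \<longleftrightarrow> (\<exists>c a b e. \<forall>z1 z2. z1 \<noteq> 0 \<longrightarrow> z2 \<noteq> 0 \<longrightarrow> z1 \<noteq> z2 \<longrightarrow>
     f z1 z2 = c * Rmon a b e z1 z2)"

lemma R_monomial_mult:
  assumes "R_monomial f" and "R_monomial g"
  shows "R_monomial (\<lambda>z1 z2. f z1 z2 * g z1 z2)"
proof -
  obtain c a b e c' a' b' e' where f:
    "\<forall>z1 z2. z1 \<noteq> 0 \<longrightarrow> z2 \<noteq> 0 \<longrightarrow> z1 \<noteq> z2 \<longrightarrow> f z1 z2 = c * Rmon a b e z1 z2"
    and g: "\<forall>z1 z2. z1 \<noteq> 0 \<longrightarrow> z2 \<noteq> 0 \<longrightarrow> z1 \<noteq> z2 \<longrightarrow> g z1 z2 = c' * Rmon a' b' e' z1 z2"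
    using assms unfolding R_monomial_def by blast
  show ?thesis
    unfolding R_monomial_def
    by (rule exI[of _ "c * c'"], rule exI[of _ "a + a'"], rule exI[of _ "b + b'"], rule exI[of _ "e + e'"])
       (auto simp: f g Rmon_def power_int_add)
qed

lemma R_monomial_powi:
  assumes "R_monomial f"
  shows "R_monomial (\<lambda>z1 z2. f z1 z2 powi n)"
proof -
  obtain c a b e where f:
    "\<forall>z1 z2. z1 \<noteq> 0 \<longrightarrow> z2 \<noteq> 0 \<longrightarrow> z1 \<noteq> z2 \<longrightarrow> f z1 z2 = c * Rmon a b e z1 z2"
    using assms unfolding R_monomial_def by blast
  show ?thesis
    unfolding R_monomial_def
    by (rule exI[of _ "c powi n"], rule exI[of _ "a * n"], rule exI[of _ "b * n"], rule exI[of _ "e * n"])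
       (auto simp: f Rmon_def power_int_mult_distrib power_int_mult)
qed

lemma R_monomial_Rmon: "R_monomial (Rmon a b e)"
  unfolding R_monomial_def by (rule exI[of _ 1]) auto

lemma R_monomial_const: "R_monomial (\<lambda>z1 z2. c)"
  unfolding R_monomial_def by (rule exI[of _ c], rule exI[of _ 0], rule exI[of _ 0], rule exI[of _ 0])
    (simp add: Rmon_def)

lemma R_monomial_z1: "R_monomial (\<lambda>z1 z2. z1)"
  unfolding R_monomial_def by (rule exI[of _ 1], rule exI[of _ 1], rule exI[of _ 0], rule exI[of _ 0])
    (simp add: Rmon_def)

lemma R_monomial_z2: "R_monomial (\<lambda>z1 z2. z2)"
  unfolding R_monomial_def by (rule exI[of _ 1], rule exI[of _ 0], rule exI[of _ 1], rule exI[of _ 0])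
    (simp add: Rmon_def)

lemma R_monomial_diff: "R_monomial (\<lambda>z1 z2. z1 - z2)"
  unfolding R_monomial_def by (rule exI[of _ 1], rule exI[of _ 0], rule exI[of _ 0], rule exI[of _ 1])
    (simp add: Rmon_def)

lemma R_monomial_power: "R_monomial f \<Longrightarrow> R_monomial (\<lambda>z1 z2. f z1 z2 ^ n)"
  using R_monomial_powi[of f "int n"] by simp

lemma R_monomial_uminus: "R_monomial f \<Longrightarrow> R_monomial (\<lambda>z1 z2. - f z1 z2)"
  using R_monomial_mult[OF R_monomial_const[of "-1"], of f] by simp

lemma R_monomial_divide: "R_monomial f \<Longrightarrow> R_monomial (\<lambda>z1 z2. f z1 z2 / c)"
  using R_monomial_mult[OF _ R_monomial_const[of "inverse c"], of f] by (simp add: divide_inverse)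

lemmas R_monomial_intros = R_monomial_Rmon R_monomial_const R_monomial_mult R_monomial_powi
  R_monomial_power R_monomial_uminus R_monomial_divide R_monomial_z1 R_monomial_z2 R_monomial_diff

interpretation tel: module "scT :: complex \<Rightarrow> ('a, 'b, 'c, 'd) tel \<Rightarrow> _"
  by unfold_locales (auto simp: scT_def fun_eq_iff algebra_simps)

lemma ten_cong:
  assumes "\<And>z1 z2. z1 \<noteq> 0 \<Longrightarrow> z2 \<noteq> 0 \<Longrightarrow> z1 \<noteq> z2 \<Longrightarrow> f z1 z2 = g z1 z2"
  shows "ten W0 W1 W2 W3 f w0 w1 w2 w3 = ten W0 W1 W2 W3 g w0 w1 w2 w3"
  using assms by (simp add: fun_eq_iff ten_def split_paired_All)

lemma ten_mult_const:
  "ten W0 W1 W2 W3 (\<lambda>z1 z2. c * f z1 z2) w0 w1 w2 w3 = scT c (ten W0 W1 W2 W3 f w0 w1 w2 w3)"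
  by (simp add: fun_eq_iff ten_def split_paired_All scT_def)

lemma ten_R_monomial:
  assumes "R_monomial f"
  obtains c a b e
  where "ten W0 W1 W2 W3 f w0 w1 w2 w3 = scT c (ten W0 W1 W2 W3 (Rmon a b e) w0 w1 w2 w3)"
proof -
  obtain c a b e where "\<And>z1 z2. z1 \<noteq> 0 \<Longrightarrow> z2 \<noteq> 0 \<Longrightarrow> z1 \<noteq> z2 \<Longrightarrow> f z1 z2 = c * Rmon a b e z1 z2"
    using assms unfolding R_monomial_def by blast
  then show ?thesis
    using that[of c a b e] by (simp add: ten_cong[of f "\<lambda>z1 z2. c * Rmon a b e z1 z2"] ten_mult_const)
qed

lemma Rmul_ten: "Rmul a b e (ten W0 W1 W2 W3 f w0 w1 w2 w3)
    = ten W0 W1 W2 W3 (\<lambda>z1 z2. Rmon a b e z1 z2 * f z1 z2) w0 w1 w2 w3"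
  by (simp add: fun_eq_iff ten_def split_paired_All Rmul_def)

lemma Rmul_hom: "module_hom scT scT (Rmul a b e)"
proof (rule module_hom.intro[OF tel.module_axioms tel.module_axioms], unfold_locales)
  show "Rmul a b e (x + y) = Rmul a b e x + Rmul a b e y" for x y
    by (simp add: fun_eq_iff split_paired_All Rmul_def algebra_simps)
  show "Rmul a b e (scT c x) = scT c (Rmul a b e x)" for c x
    by (simp add: fun_eq_iff split_paired_All Rmul_def scT_def)
qed

lemma Rmul_fsum_in_subspace:
  assumes "tel.subspace Z" and "\<And>i. Rmul a b e (g i) \<in> Z"
  shows "Rmul a b e (fsum g) \<in> Z"
proof -
  have "tel.subspace (Rmul a b e -` Z)" by (rule module_hom.subspace_vimage[OF Rmul_hom assms(1)])
  then have "fsum g \<in> Rmul a b e -` Z" by (rule tel.fsum_in_subspace) (use assms(2) in simp)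
  then show ?thesis by simp
qed

locale four_modules =
  fixes V :: "'v::ab_group_add voa"
    and W0 :: "('v, 'a::ab_group_add) vmod" and W1 :: "('v, 'b::ab_group_add) vmod"
    and W2 :: "('v, 'c::ab_group_add) vmod" and W3 :: "('v, 'd::ab_group_add) vmod"
  assumes V: "is_VOA V"
    and disc0: "is_disc_module V W0" and disc1: "is_disc_module V W1"
    and disc2: "is_disc_module V W2" and disc3: "is_disc_module V W3"
begin

abbreviation "F \<equiv> FT V W0 W1 W2 W3"
abbreviation "J \<equiv> Jsp V W0 W1 W2 W3"
abbreviation "T \<equiv> Tsp W0 W1 W2 W3"
abbreviation "tn \<equiv> ten W0 W1 W2 W3"

lemma ten_hom_slot0: "module_hom (msc W0) scT (\<lambda>x. tn f x w1 w2 w3)"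
proof (rule module_hom.intro[OF is_disc_module_module[OF disc0] tel.module_axioms], unfold_locales)
  show "tn f (x + y) w1 w2 w3 = tn f x w1 w2 w3 + tn f y w1 w2 w3" for x y
    by (auto simp: fun_eq_iff ten_def split_paired_All linear_map_add algebra_simps)
  show "tn f (msc W0 c x) w1 w2 w3 = scT c (tn f x w1 w2 w3)" for c x
    by (auto simp: fun_eq_iff ten_def split_paired_All linear_map_scale scT_def)
qed

lemma ten_hom_slot1: "module_hom (msc W1) scT (\<lambda>x. tn f w0 x w2 w3)"
proof (rule module_hom.intro[OF is_disc_module_module[OF disc1] tel.module_axioms], unfold_locales)
  show "tn f w0 (x + y) w2 w3 = tn f w0 x w2 w3 + tn f w0 y w2 w3" for x y
    by (auto simp: fun_eq_iff ten_def split_paired_All linear_map_add algebra_simps)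
  show "tn f w0 (msc W1 c x) w2 w3 = scT c (tn f w0 x w2 w3)" for c x
    by (auto simp: fun_eq_iff ten_def split_paired_All linear_map_scale scT_def)
qed

lemma ten_hom_slot2: "module_hom (msc W2) scT (\<lambda>x. tn f w0 w1 x w3)"
proof (rule module_hom.intro[OF is_disc_module_module[OF disc2] tel.module_axioms], unfold_locales)
  show "tn f w0 w1 (x + y) w3 = tn f w0 w1 x w3 + tn f w0 w1 y w3" for x y
    by (auto simp: fun_eq_iff ten_def split_paired_All linear_map_add algebra_simps)
  show "tn f w0 w1 (msc W2 c x) w3 = scT c (tn f w0 w1 x w3)" for c x
    by (auto simp: fun_eq_iff ten_def split_paired_All linear_map_scale scT_def)
qed

lemma ten_hom_slot3: "module_hom (msc W3) scT (\<lambda>x. tn f w0 w1 w2 x)"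
proof (rule module_hom.intro[OF is_disc_module_module[OF disc3] tel.module_axioms], unfold_locales)
  show "tn f w0 w1 w2 (x + y) = tn f w0 w1 w2 x + tn f w0 w1 w2 y" for x y
    by (auto simp: fun_eq_iff ten_def split_paired_All linear_map_add algebra_simps)
  show "tn f w0 w1 w2 (msc W3 c x) = scT c (tn f w0 w1 w2 x)" for c x
    by (auto simp: fun_eq_iff ten_def split_paired_All linear_map_scale scT_def)
qed

lemma FT_subspace: "tel.subspace (F r)"
  unfolding FT_def by (rule tel.subspace_span)

lemma Jsp_subspace: "tel.subspace J"
  unfolding Jsp_def by (rule tel.subspace_span)

lemma Tsp_subspace: "tel.subspace T"
  unfolding Tsp_def by (rule tel.subspace_span)

lemma FT_mono: "r \<le> r' \<Longrightarrow> F r \<subseteq> F r'"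
  unfolding FT_def by (rule tel.span_mono) fastforce

lemma FT_subset_Tsp: "F r \<subseteq> T"
  unfolding FT_def Tsp_def by (rule tel.span_mono) blast

lemma FT_subsetI:
  assumes Z: "tel.subspace Z"
    and hom: "\<And>a b e w0 w1 w2 w3 r0 r1 r2 r3. w0 \<in> Wgr V W0 r0 \<Longrightarrow> w1 \<in> Wgr V W1 r1 \<Longrightarrow>
      w2 \<in> Wgr V W2 r2 \<Longrightarrow> w3 \<in> Wgr V W3 r3 \<Longrightarrow> r0 + r1 + r2 + r3 \<le> r \<Longrightarrow>
      tn (Rmon a b e) w0 w1 w2 w3 \<in> Z"
  shows "F r \<subseteq> Z"
  unfolding FT_def by (rule tel.span_minimal[OF _ Z]) (blast intro: hom)

lemma ten_in_FT:
  assumes f: "R_monomial f"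
    and w: "w0 \<in> Wgr V W0 r0" "w1 \<in> Wgr V W1 r1" "w2 \<in> Wgr V W2 r2" "w3 \<in> Wgr V W3 r3"
    and r: "r0 + r1 + r2 + r3 \<le> r"
  shows "tn f w0 w1 w2 w3 \<in> F r"
proof -
  obtain c a b e where "tn f w0 w1 w2 w3 = scT c (tn (Rmon a b e) w0 w1 w2 w3)"
    using ten_R_monomial[OF f] .
  also have "\<dots> \<in> F r"
    unfolding FT_def using w r by (intro tel.span_scale tel.span_base) blast
  finally show ?thesis .
qed

lemma ten_in_Tsp:
  assumes f: "R_monomial f"
  shows "tn f w0 w1 w2 w3 \<in> T"
proof -
  obtain c a b e where "tn f w0 w1 w2 w3 = scT c (tn (Rmon a b e) w0 w1 w2 w3)"
    using ten_R_monomial[OF f] .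
  also have "\<dots> \<in> T"
    unfolding Tsp_def by (intro tel.span_scale tel.span_base) blast
  finally show ?thesis .
qed

lemma Rmul_ten_in_FT:
  assumes "R_monomial f"
    and "w0 \<in> Wgr V W0 r0" "w1 \<in> Wgr V W1 r1" "w2 \<in> Wgr V W2 r2" "w3 \<in> Wgr V W3 r3"
    and "r0 + r1 + r2 + r3 \<le> r"
  shows "Rmul a b e (tn f w0 w1 w2 w3) \<in> F r"
  unfolding Rmul_ten using assms by (intro ten_in_FT R_monomial_intros)

lemma Rmul_ten_in_Tsp: "R_monomial f \<Longrightarrow> Rmul a b e (tn f w0 w1 w2 w3) \<in> T"
  unfolding Rmul_ten by (intro ten_in_Tsp R_monomial_intros)

lemma Rmul_ten_one: "Rmul a b e (tn (\<lambda>z1 z2. 1) w0 w1 w2 w3) = tn (Rmon a b e) w0 w1 w2 w3"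
  unfolding Rmul_ten by simp

lemma Rmul_gen_in_Jsp:
  "u \<in> Vplus V \<Longrightarrow> g \<in> {genA, genB, genC, genD} \<Longrightarrow> Rmul a b e (g V W0 W1 W2 W3 u w0 w1 w2 w3) \<in> J"
  unfolding Jsp_def gens_def by (rule tel.span_base) blast

lemma Rmul_gen_in_Tsp:
  assumes "g \<in> gens V W0 W1 W2 W3"
  shows "Rmul a b e g \<in> T"
proof -
  note intros = tel.subspace_diff[OF Tsp_subspace] Rmul_fsum_in_subspace[OF Tsp_subspace]
    Rmul_ten_in_Tsp R_monomial_intros
  have "Rmul a b e (genA V W0 W1 W2 W3 u w0 w1 w2 w3) \<in> T"
    and "Rmul a b e (genB V W0 W1 W2 W3 u w0 w1 w2 w3) \<in> T"
    and "Rmul a b e (genC V W0 W1 W2 W3 u w0 w1 w2 w3) \<in> T"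
    and "Rmul a b e (genD V W0 W1 W2 W3 u w0 w1 w2 w3) \<in> T"
    for u w0 w1 w2 w3
    unfolding genA_def genB_def genC_def genD_def Dterm1_def Dterm2_def module_hom.diff[OF Rmul_hom]
    by (intro intros)+
  then show ?thesis using assms unfolding gens_def by blast
qed

lemma Jsp_subset_Tsp: "J \<subseteq> T"
  unfolding Jsp_def by (rule tel.span_minimal[OF _ Tsp_subspace]) (auto intro: Rmul_gen_in_Tsp)

lemma Tsp_subsetI:
  assumes Z: "tel.subspace Z"
    and hom: "\<And>a b e w0 w1 w2 w3 r0 r1 r2 r3. w0 \<in> Wgr V W0 r0 \<Longrightarrow> w1 \<in> Wgr V W1 r1 \<Longrightarrow>
      w2 \<in> Wgr V W2 r2 \<Longrightarrow> w3 \<in> Wgr V W3 r3 \<Longrightarrow> tn (Rmon a b e) w0 w1 w2 w3 \<in> Z"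
  shows "T \<subseteq> Z"
proof -
  have homog012: "tn (Rmon a b e) w0 w1 w2 x \<in> Z"
    if "w0 \<in> Wgr V W0 r0" "w1 \<in> Wgr V W1 r1" "w2 \<in> Wgr V W2 r2" for a b e w0 w1 w2 x r0 r1 r2
    using module_hom_span_in_subspace[OF ten_hom_slot3 Z _ in_span_homogeneous[OF disc3]] hom that
    by blast
  have homog01: "tn (Rmon a b e) w0 w1 x y \<in> Z"
    if "w0 \<in> Wgr V W0 r0" "w1 \<in> Wgr V W1 r1" for a b e w0 w1 x y r0 r1
    using module_hom_span_in_subspace[OF ten_hom_slot2 Z _ in_span_homogeneous[OF disc2]] homog012 that
    by blast
  have homog0: "tn (Rmon a b e) w0 x y z \<in> Z" if "w0 \<in> Wgr V W0 r0" for a b e w0 x y z r0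
    using module_hom_span_in_subspace[OF ten_hom_slot1 Z _ in_span_homogeneous[OF disc1]] homog01 that
    by blast
  have "tn (Rmon a b e) w x y z \<in> Z" for a b e w x y z
    using module_hom_span_in_subspace[OF ten_hom_slot0 Z _ in_span_homogeneous[OF disc0]] homog0
    by blast
  then show ?thesis
    unfolding Tsp_def by (intro tel.span_minimal[OF _ Z]) blast
qed

section \<open>Lowering the weight modulo J\<close>

lemma in_setplus_J_FT:
  assumes "x \<in> J" and "t - x \<in> F \<rho>"
  shows "t \<in> setplus J (F \<rho>)"
proof -
  have "t = x + (t - x)" by simp
  then show ?thesis unfolding setplus_def using assms by blast
qed

lemma leading_term_genA:
  assumes u: "u \<in> Vgr V p" "p > 0"
    and w: "w0 \<in> Wgr V W0 r0" "w \<in> Wgr V W1 q" "w2 \<in> Wgr V W2 r2" "w3 \<in> Wgr V W3 r3"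
    and rho: "\<rho> = r0 + (q + of_int p) + r2 + r3"
  shows "tn (Rmon a b e) w0 (mY W1 u (-1) w) w2 w3 \<in> setplus J (F (\<rho> - 1))"
proof (rule in_setplus_J_FT)
  show "- Rmul a b e (genA V W0 W1 W2 W3 u w0 w w2 w3) \<in> J"
    using u Vgr_subset_Vplus[OF V] by (intro tel.subspace_neg[OF Jsp_subspace] Rmul_gen_in_Jsp) auto
  have p: "real_of_int p \<ge> 1" using u by simp
  have "tn (Rmon a b e) w0 (mY W1 u (-1) w) w2 w3 - - Rmul a b e (genA V W0 W1 W2 W3 u w0 w w2 w3)
    = Rmul a b e (fsum (\<lambda>k::nat. tn (\<lambda>z1 z2. ((-1) gchoose k) * (- z1) ^ k)
                       (ustar V W0 u (-1 - int k) w0) w w2 w3))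
     - Rmul a b e (fsum (\<lambda>k::nat. tn (\<lambda>z1 z2. ((-1) gchoose k) * (- (z1 - z2)) powi (-1 - int k))
                       w0 w (mY W2 u (int k) w2) w3))
     - Rmul a b e (fsum (\<lambda>k::nat. tn (\<lambda>z1 z2. ((-1) gchoose k) * (- z1) powi (-1 - int k))
                       w0 w w2 (mY W3 u (int k) w3)))"
    unfolding genA_def module_hom.diff[OF Rmul_hom] Rmul_ten_one by simp
  also have "\<dots> \<in> F (\<rho> - 1)"
  proof (intro tel.subspace_diff[OF FT_subspace] Rmul_fsum_in_subspace[OF FT_subspace])
    fix k :: nat
    show "Rmul a b e (tn (\<lambda>z1 z2. ((-1) gchoose k) * (- z1) ^ k)
        (ustar V W0 u (-1 - int k) w0) w w2 w3) \<in> F (\<rho> - 1)"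
      by (rule Rmul_ten_in_FT[OF _ weight_ustar[OF V disc0 u(1) w(1)] w(2-4)])
         (intro R_monomial_intros, use rho p in simp)
    show "Rmul a b e (tn (\<lambda>z1 z2. ((-1) gchoose k) * (- (z1 - z2)) powi (-1 - int k))
        w0 w (mY W2 u (int k) w2) w3) \<in> F (\<rho> - 1)"
      by (rule Rmul_ten_in_FT[OF _ w(1,2) weight_mY[OF V disc2 u(1) w(3)] w(4)])
         (intro R_monomial_intros, use rho p in simp)
    show "Rmul a b e (tn (\<lambda>z1 z2. ((-1) gchoose k) * (- z1) powi (-1 - int k))
        w0 w w2 (mY W3 u (int k) w3)) \<in> F (\<rho> - 1)"
      by (rule Rmul_ten_in_FT[OF _ w(1-3) weight_mY[OF V disc3 u(1) w(4)]])
         (intro R_monomial_intros, use rho p in simp)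
  qed
  finally show "tn (Rmon a b e) w0 (mY W1 u (-1) w) w2 w3 - - Rmul a b e (genA V W0 W1 W2 W3 u w0 w w2 w3)
    \<in> F (\<rho> - 1)" .
qed

lemma leading_term_genB:
  assumes u: "u \<in> Vgr V p" "p > 0"
    and w: "w0 \<in> Wgr V W0 r0" "w1 \<in> Wgr V W1 r1" "w \<in> Wgr V W2 q" "w3 \<in> Wgr V W3 r3"
    and rho: "\<rho> = r0 + r1 + (q + of_int p) + r3"
  shows "tn (Rmon a b e) w0 w1 (mY W2 u (-1) w) w3 \<in> setplus J (F (\<rho> - 1))"
proof (rule in_setplus_J_FT)
  show "- Rmul a b e (genB V W0 W1 W2 W3 u w0 w1 w w3) \<in> J"
    using u Vgr_subset_Vplus[OF V] by (intro tel.subspace_neg[OF Jsp_subspace] Rmul_gen_in_Jsp) auto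
  have p: "real_of_int p \<ge> 1" using u by simp
  have "tn (Rmon a b e) w0 w1 (mY W2 u (-1) w) w3 - - Rmul a b e (genB V W0 W1 W2 W3 u w0 w1 w w3)
    = Rmul a b e (fsum (\<lambda>k::nat. tn (\<lambda>z1 z2. ((-1) gchoose k) * (- z2) ^ k)
                       (ustar V W0 u (-1 - int k) w0) w1 w w3))
     - Rmul a b e (fsum (\<lambda>k::nat. tn (\<lambda>z1 z2. ((-1) gchoose k) * (z1 - z2) powi (-1 - int k))
                       w0 (mY W1 u (int k) w1) w w3))
     - Rmul a b e (fsum (\<lambda>k::nat. tn (\<lambda>z1 z2. ((-1) gchoose k) * (- z2) powi (-1 - int k))
                       w0 w1 w (mY W3 u (int k) w3)))"
    unfolding genB_def module_hom.diff[OF Rmul_hom] Rmul_ten_one by simp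
  also have "\<dots> \<in> F (\<rho> - 1)"
  proof (intro tel.subspace_diff[OF FT_subspace] Rmul_fsum_in_subspace[OF FT_subspace])
    fix k :: nat
    show "Rmul a b e (tn (\<lambda>z1 z2. ((-1) gchoose k) * (- z2) ^ k)
        (ustar V W0 u (-1 - int k) w0) w1 w w3) \<in> F (\<rho> - 1)"
      by (rule Rmul_ten_in_FT[OF _ weight_ustar[OF V disc0 u(1) w(1)] w(2-4)])
         (intro R_monomial_intros, use rho p in simp)
    show "Rmul a b e (tn (\<lambda>z1 z2. ((-1) gchoose k) * (z1 - z2) powi (-1 - int k))
        w0 (mY W1 u (int k) w1) w w3) \<in> F (\<rho> - 1)"
      by (rule Rmul_ten_in_FT[OF _ w(1) weight_mY[OF V disc1 u(1) w(2)] w(3,4)])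
         (intro R_monomial_intros, use rho p in simp)
    show "Rmul a b e (tn (\<lambda>z1 z2. ((-1) gchoose k) * (- z2) powi (-1 - int k))
        w0 w1 w (mY W3 u (int k) w3)) \<in> F (\<rho> - 1)"
      by (rule Rmul_ten_in_FT[OF _ w(1-3) weight_mY[OF V disc3 u(1) w(4)]])
         (intro R_monomial_intros, use rho p in simp)
  qed
  finally show "tn (Rmon a b e) w0 w1 (mY W2 u (-1) w) w3 - - Rmul a b e (genB V W0 W1 W2 W3 u w0 w1 w w3)
    \<in> F (\<rho> - 1)" .
qed

lemma leading_term_genC:
  assumes u: "u \<in> Vgr V p" "p > 0"
    and w: "w0 \<in> Wgr V W0 r0" "w1 \<in> Wgr V W1 r1" "w2 \<in> Wgr V W2 r2" "w \<in> Wgr V W3 q"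
    and rho: "\<rho> = r0 + r1 + r2 + (q + of_int p)"
  shows "tn (Rmon a b e) w0 w1 w2 (mY W3 u (-1) w) \<in> setplus J (F (\<rho> - 1))"
proof (rule in_setplus_J_FT)
  show "- Rmul a b e (genC V W0 W1 W2 W3 u w0 w1 w2 w) \<in> J"
    using u Vgr_subset_Vplus[OF V] by (intro tel.subspace_neg[OF Jsp_subspace] Rmul_gen_in_Jsp) auto
  have p: "real_of_int p \<ge> 1" using u by simp
  have "tn (Rmon a b e) w0 w1 w2 (mY W3 u (-1) w) - - Rmul a b e (genC V W0 W1 W2 W3 u w0 w1 w2 w)
    = Rmul a b e (tn (\<lambda>z1 z2. 1) (ustar V W0 u (-1) w0) w1 w2 w)
     - Rmul a b e (fsum (\<lambda>k::nat. tn (\<lambda>z1 z2. ((-1) gchoose k) * z1 powi (-1 - int k))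
                       w0 (mY W1 u (int k) w1) w2 w))
     - Rmul a b e (fsum (\<lambda>k::nat. tn (\<lambda>z1 z2. ((-1) gchoose k) * z2 powi (-1 - int k))
                       w0 w1 (mY W2 u (int k) w2) w))"
    unfolding genC_def module_hom.diff[OF Rmul_hom] Rmul_ten_one by simp
  also have "\<dots> \<in> F (\<rho> - 1)"
  proof (intro tel.subspace_diff[OF FT_subspace] Rmul_fsum_in_subspace[OF FT_subspace])
    show "Rmul a b e (tn (\<lambda>z1 z2. 1) (ustar V W0 u (-1) w0) w1 w2 w) \<in> F (\<rho> - 1)"
      by (rule Rmul_ten_in_FT[OF _ weight_ustar[OF V disc0 u(1) w(1)] w(2-4)])
         (intro R_monomial_intros, use rho p in simp)
    fix k :: nat
    show "Rmul a b e (tn (\<lambda>z1 z2. ((-1) gchoose k) * z1 powi (-1 - int k))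
        w0 (mY W1 u (int k) w1) w2 w) \<in> F (\<rho> - 1)"
      by (rule Rmul_ten_in_FT[OF _ w(1) weight_mY[OF V disc1 u(1) w(2)] w(3,4)])
         (intro R_monomial_intros, use rho p in simp)
    show "Rmul a b e (tn (\<lambda>z1 z2. ((-1) gchoose k) * z2 powi (-1 - int k))
        w0 w1 (mY W2 u (int k) w2) w) \<in> F (\<rho> - 1)"
      by (rule Rmul_ten_in_FT[OF _ w(1,2) weight_mY[OF V disc2 u(1) w(3)] w(4)])
         (intro R_monomial_intros, use rho p in simp)
  qed
  finally show "tn (Rmon a b e) w0 w1 w2 (mY W3 u (-1) w) - - Rmul a b e (genC V W0 W1 W2 W3 u w0 w1 w2 w)
    \<in> F (\<rho> - 1)" .
qed

lemma leading_term_genD: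
  assumes u: "u \<in> Vgr V p" "p > 0"
    and w: "w \<in> Wgr V W0 q" "w1 \<in> Wgr V W1 r1" "w2 \<in> Wgr V W2 r2" "w3 \<in> Wgr V W3 r3"
    and rho: "\<rho> = (q + of_int p) + r1 + r2 + r3"
  shows "tn (Rmon a b e) (mY W0 u (-1) w) w1 w2 w3 \<in> setplus J (F (\<rho> - 1))"
proof (rule in_setplus_J_FT)
  show "Rmul a b e (genD V W0 W1 W2 W3 u w w1 w2 w3) \<in> J"
    using u Vgr_subset_Vplus[OF V] by (intro Rmul_gen_in_Jsp) auto
  have p: "real_of_int p \<ge> 1" using u by simp
  have "tn (Rmon a b e) (mY W0 u (-1) w) w1 w2 w3 - Rmul a b e (genD V W0 W1 W2 W3 u w w1 w2 w3)
    = Rmul a b e (Dterm1 V W0 W1 W2 W3 u w w1 w2 w3) + Rmul a b e (Dterm2 V W0 W1 W2 W3 u w w1 w2 w3)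
     + Rmul a b e (tn (\<lambda>z1 z2. 1) w w1 w2 (ustar V W3 u (-1) w3))"
    unfolding genD_def module_hom.diff[OF Rmul_hom] Rmul_ten_one by (simp add: algebra_simps)
  also have "\<dots> \<in> F (\<rho> - 1)"
    unfolding Dterm1_def Dterm2_def
  proof (intro tel.subspace_add[OF FT_subspace] Rmul_fsum_in_subspace[OF FT_subspace])
    fix k i j :: nat and m :: int
    show "Rmul a b e (tn (\<lambda>z1 z2. ((-1) gchoose k) * z1 ^ (1 + k) * (- (z1 ^ 2)) powi (m - int k - 1)
          * (z1 powi (- int i) / fact i) * ((- z1) powi (- int j) / fact j))
        w ((mL V W1 1 ^^ i) (mY W1 (grcomp (Vgr V) u m) (int k) ((mL V W1 1 ^^ j) w1))) w2 w3)
      \<in> F (\<rho> - 1)"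
      by (rule Rmul_ten_in_FT[OF _ w(1) weight_mL1_pow[OF V disc1
            weight_mY_grcomp[OF V disc1 u(1) weight_mL1_pow[OF V disc1 w(2)]]] w(3,4)])
         (intro R_monomial_intros, use rho p in simp)
    show "Rmul a b e (tn (\<lambda>z1 z2. ((-1) gchoose k) * z2 ^ (1 + k) * (- (z2 ^ 2)) powi (m - int k - 1)
          * (z2 powi (- int i) / fact i) * ((- z2) powi (- int j) / fact j))
        w w1 ((mL V W2 1 ^^ i) (mY W2 (grcomp (Vgr V) u m) (int k) ((mL V W2 1 ^^ j) w2))) w3)
      \<in> F (\<rho> - 1)"
      by (rule Rmul_ten_in_FT[OF _ w(1,2) weight_mL1_pow[OF V disc2
            weight_mY_grcomp[OF V disc2 u(1) weight_mL1_pow[OF V disc2 w(3)]]] w(4)])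
         (intro R_monomial_intros, use rho p in simp)
    show "Rmul a b e (tn (\<lambda>z1 z2. 1) w w1 w2 (ustar V W3 u (-1) w3)) \<in> F (\<rho> - 1)"
      by (rule Rmul_ten_in_FT[OF _ w(1-3) weight_ustar[OF V disc3 u(1) w(4)]])
         (intro R_monomial_intros, use rho p in simp)
  qed
  finally show "tn (Rmon a b e) (mY W0 u (-1) w) w1 w2 w3 - Rmul a b e (genD V W0 W1 W2 W3 u w w1 w2 w3)
    \<in> F (\<rho> - 1)" .
qed

definition FT_reducible :: "int \<Rightarrow> real \<Rightarrow> bool" where
  "FT_reducible M r \<longleftrightarrow> F r \<subseteq> setplus (J \<inter> F r) (F (real_of_int M))"

lemma reducible_subspace: "tel.subspace (setplus (J \<inter> F r) (F M))"
  by (intro tel.subspace_setplus tel.subspace_inter Jsp_subspace FT_subspace)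

lemma FT_subset_reducible: "F (real_of_int M) \<subseteq> setplus (J \<inter> F r) (F (real_of_int M))"
proof
  fix t assume "t \<in> F (real_of_int M)"
  moreover have "0 \<in> J \<inter> F r"
    using tel.subspace_0[OF Jsp_subspace] tel.subspace_0[OF FT_subspace] by blast
  ultimately show "t \<in> setplus (J \<inter> F r) (F (real_of_int M))"
    unfolding setplus_def by force
qed

lemma FT_reducible_le: "r \<le> real_of_int M \<Longrightarrow> FT_reducible M r"
  unfolding FT_reducible_def using FT_mono FT_subset_reducible by blast

context
  fixes M :: int and \<rho> r :: real
  assumes IH: "FT_reducible M (\<rho> - 1)" and r: "\<rho> - 1 \<le> r" "real_of_int M \<le> r"
begin

lemma reducible_if_lower_mod_J:
  assumes t: "t \<in> F r" "t \<in> setplus J (F (\<rho> - 1))"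
  shows "t \<in> setplus (J \<inter> F r) (F M)"
proof -
  obtain x y where t_eq: "t = x + y" and x: "x \<in> J" and y: "y \<in> F (\<rho> - 1)"
    using t(2) unfolding setplus_def by blast
  obtain j m where y_eq: "y = j + m" and j: "j \<in> J" and m: "m \<in> F M"
    using IH y unfolding FT_reducible_def setplus_def by blast
  have "x + j = t - m" using t_eq y_eq by (simp add: algebra_simps)
  moreover have "m \<in> F r" using m FT_mono[OF r(2)] by blast
  ultimately have "x + j \<in> J \<inter> F r"
    using tel.subspace_add[OF Jsp_subspace x j] tel.subspace_diff[OF FT_subspace t(1)] by simp
  moreover have "t = (x + j) + m" using t_eq y_eq by (simp add: algebra_simps)
  ultimately show ?thesis using m unfolding setplus_def by blast
qed

lemma reducible_via_C1_component:
  fixes W :: "('v, 'z::ab_group_add) vmod" and L :: "'z \<Rightarrow> ('a, 'b, 'c, 'd) tel"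
  assumes W: "is_disc_module V W" and L: "module_hom (msc W) scT L"
    and w: "w \<in> C1_component V W s"
    and weight: "\<And>y. y \<in> Wgr V W s \<Longrightarrow> L y \<in> F r"
    and leading: "\<And>u p x. u \<in> Vgr V p \<Longrightarrow> p > 0 \<Longrightarrow> x \<in> Wgr V W (s - of_int p) \<Longrightarrow>
      L (mY W u (-1) x) \<in> setplus J (F (\<rho> - 1))"
  shows "L w \<in> setplus (J \<inter> F r) (F M)"
  using w unfolding C1_component_def
proof (rule module_hom_span_in_subspace[OF L reducible_subspace, rotated])
  fix y assume "y \<in> {mY W u (-1) x | u x p. p > 0 \<and> u \<in> Vgr V p \<and> x \<in> Wgr V W (s - of_int p)}"
  then obtain u x p where y: "y = mY W u (-1) x" and u: "u \<in> Vgr V p" "p > 0"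
    and x: "x \<in> Wgr V W (s - of_int p)"
    by blast
  have "y \<in> Wgr V W s" using weight_mY[OF V W u(1) x, of "-1"] y by simp
  then show "L y \<in> setplus (J \<inter> F r) (F M)"
    using reducible_if_lower_mod_J[OF weight leading[OF u x]] y by simp
qed

context
  fixes r0 r1 r2 r3 :: real
  assumes rho: "\<rho> = r0 + r1 + r2 + r3" and le: "r0 + r1 + r2 + r3 \<le> r"
begin

lemma reducible_if_slot0_in_C1:
  assumes w: "w0 \<in> C1_component V W0 r0" "w1 \<in> Wgr V W1 r1" "w2 \<in> Wgr V W2 r2" "w3 \<in> Wgr V W3 r3"
  shows "tn (Rmon a b e) w0 w1 w2 w3 \<in> setplus (J \<inter> F r) (F M)"
proof (rule reducible_via_C1_component[OF disc0 ten_hom_slot0 w(1)])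
  show "tn (Rmon a b e) y w1 w2 w3 \<in> F r" if "y \<in> Wgr V W0 r0" for y
    by (rule ten_in_FT[OF R_monomial_Rmon that w(2-4) le])
  show "tn (Rmon a b e) (mY W0 u (-1) x) w1 w2 w3 \<in> setplus J (F (\<rho> - 1))"
    if "u \<in> Vgr V p" "p > 0" "x \<in> Wgr V W0 (r0 - of_int p)" for u p x
    by (rule leading_term_genD[OF that w(2-4)]) (simp add: rho)
qed

lemma reducible_if_slot1_in_C1:
  assumes w: "w0 \<in> Wgr V W0 r0" "w1 \<in> C1_component V W1 r1" "w2 \<in> Wgr V W2 r2" "w3 \<in> Wgr V W3 r3"
  shows "tn (Rmon a b e) w0 w1 w2 w3 \<in> setplus (J \<inter> F r) (F M)"
proof (rule reducible_via_C1_component[OF disc1 ten_hom_slot1 w(2)])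
  show "tn (Rmon a b e) w0 y w2 w3 \<in> F r" if "y \<in> Wgr V W1 r1" for y
    by (rule ten_in_FT[OF R_monomial_Rmon w(1) that w(3,4) le])
  show "tn (Rmon a b e) w0 (mY W1 u (-1) x) w2 w3 \<in> setplus J (F (\<rho> - 1))"
    if "u \<in> Vgr V p" "p > 0" "x \<in> Wgr V W1 (r1 - of_int p)" for u p x
    by (rule leading_term_genA[OF that(1,2) w(1) that(3) w(3,4)]) (simp add: rho)
qed

lemma reducible_if_slot2_in_C1:
  assumes w: "w0 \<in> Wgr V W0 r0" "w1 \<in> Wgr V W1 r1" "w2 \<in> C1_component V W2 r2" "w3 \<in> Wgr V W3 r3"
  shows "tn (Rmon a b e) w0 w1 w2 w3 \<in> setplus (J \<inter> F r) (F M)"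
proof (rule reducible_via_C1_component[OF disc2 ten_hom_slot2 w(3)])
  show "tn (Rmon a b e) w0 w1 y w3 \<in> F r" if "y \<in> Wgr V W2 r2" for y
    by (rule ten_in_FT[OF R_monomial_Rmon w(1,2) that w(4) le])
  show "tn (Rmon a b e) w0 w1 (mY W2 u (-1) x) w3 \<in> setplus J (F (\<rho> - 1))"
    if "u \<in> Vgr V p" "p > 0" "x \<in> Wgr V W2 (r2 - of_int p)" for u p x
    by (rule leading_term_genB[OF that(1,2) w(1,2) that(3) w(4)]) (simp add: rho)
qed

lemma reducible_if_slot3_in_C1:
  assumes w: "w0 \<in> Wgr V W0 r0" "w1 \<in> Wgr V W1 r1" "w2 \<in> Wgr V W2 r2" "w3 \<in> C1_component V W3 r3"
  shows "tn (Rmon a b e) w0 w1 w2 w3 \<in> setplus (J \<inter> F r) (F M)"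
proof (rule reducible_via_C1_component[OF disc3 ten_hom_slot3 w(4)])
  show "tn (Rmon a b e) w0 w1 w2 y \<in> F r" if "y \<in> Wgr V W3 r3" for y
    by (rule ten_in_FT[OF R_monomial_Rmon w(1-3) that le])
  show "tn (Rmon a b e) w0 w1 w2 (mY W3 u (-1) x) \<in> setplus J (F (\<rho> - 1))"
    if "u \<in> Vgr V p" "p > 0" "x \<in> Wgr V W3 (r3 - of_int p)" for u p x
    by (rule leading_term_genC[OF that(1,2) w(1-3) that(3)]) (simp add: rho)
qed

end

end

lemma homogeneous_tensor_reducible:
  fixes M :: int and M0 M1 M2 M3 :: real
  assumes high0: "\<And>s. s > M0 \<Longrightarrow> Wgr V W0 s \<subseteq> C1_component V W0 s"
    and high1: "\<And>s. s > M1 \<Longrightarrow> Wgr V W1 s \<subseteq> C1_component V W1 s"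
    and high2: "\<And>s. s > M2 \<Longrightarrow> Wgr V W2 s \<subseteq> C1_component V W2 s"
    and high3: "\<And>s. s > M3 \<Longrightarrow> Wgr V W3 s \<subseteq> C1_component V W3 s"
    and M: "M0 + M1 + M2 + M3 \<le> real_of_int M"
    and IH: "\<And>r'. r' \<le> r - 1 \<Longrightarrow> FT_reducible M r'"
    and w: "w0 \<in> Wgr V W0 r0" "w1 \<in> Wgr V W1 r1" "w2 \<in> Wgr V W2 r2" "w3 \<in> Wgr V W3 r3"
    and r: "r0 + r1 + r2 + r3 \<le> r"
  shows "tn (Rmon a b e) w0 w1 w2 w3 \<in> setplus (J \<inter> F r) (F M)"
proof (cases "r0 + r1 + r2 + r3 \<le> M")
  case True
  then show ?thesis
    using ten_in_FT[OF R_monomial_Rmon w True] FT_subset_reducible by blast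
next
  case False
  let ?\<rho> = "r0 + r1 + r2 + r3"
  have IH': "FT_reducible M (?\<rho> - 1)" and r': "?\<rho> - 1 \<le> r" "real_of_int M \<le> r"
    using False IH r by auto
  consider "r0 > M0" | "r1 > M1" | "r2 > M2" | "r3 > M3" using False M by linarith
  then show ?thesis
  proof cases
    case 1
    show ?thesis
      by (rule reducible_if_slot0_in_C1[OF IH' r' refl r subsetD[OF high0[OF 1] w(1)] w(2-4)])
  next
    case 2
    show ?thesis
      by (rule reducible_if_slot1_in_C1[OF IH' r' refl r w(1) subsetD[OF high1[OF 2] w(2)] w(3,4)])
  next
    case 3
    show ?thesis
      by (rule reducible_if_slot2_in_C1[OF IH' r' refl r w(1,2) subsetD[OF high2[OF 3] w(3)] w(4)])
  next
    case 4
    show ?thesis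
      by (rule reducible_if_slot3_in_C1[OF IH' r' refl r w(1-3) subsetD[OF high3[OF 4] w(4)]])
  qed
qed

lemma FT_reducible_step:
  fixes M :: int and M0 M1 M2 M3 :: real
  assumes "\<And>s. s > M0 \<Longrightarrow> Wgr V W0 s \<subseteq> C1_component V W0 s"
    and "\<And>s. s > M1 \<Longrightarrow> Wgr V W1 s \<subseteq> C1_component V W1 s"
    and "\<And>s. s > M2 \<Longrightarrow> Wgr V W2 s \<subseteq> C1_component V W2 s"
    and "\<And>s. s > M3 \<Longrightarrow> Wgr V W3 s \<subseteq> C1_component V W3 s"
    and "M0 + M1 + M2 + M3 \<le> real_of_int M"
    and "\<And>r'. r' \<le> r - 1 \<Longrightarrow> FT_reducible M r'"
  shows "FT_reducible M r"
  unfolding FT_reducible_def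
  by (rule FT_subsetI[OF reducible_subspace homogeneous_tensor_reducible[OF assms]])

lemma Tsp_eq_J_plus_FT:
  assumes "\<And>r. FT_reducible M r"
  shows "T = setplus J (F (real_of_int M))"
proof
  show "T \<subseteq> setplus J (F (real_of_int M))"
  proof (rule Tsp_subsetI[OF tel.subspace_setplus[OF Jsp_subspace FT_subspace]])
    fix a b e w0 w1 w2 w3 r0 r1 r2 r3
    assume "w0 \<in> Wgr V W0 r0" "w1 \<in> Wgr V W1 r1" "w2 \<in> Wgr V W2 r2" "w3 \<in> Wgr V W3 r3"
    then have "tn (Rmon a b e) w0 w1 w2 w3 \<in> F (r0 + r1 + r2 + r3)"
      by (rule ten_in_FT[OF R_monomial_Rmon _ _ _ _ order_refl])
    then show "tn (Rmon a b e) w0 w1 w2 w3 \<in> setplus J (F (real_of_int M))"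
      using assms unfolding FT_reducible_def setplus_def by blast
  qed
  show "setplus J (F (real_of_int M)) \<subseteq> T"
    unfolding setplus_def
    using Jsp_subset_Tsp FT_subset_Tsp tel.subspace_add[OF Tsp_subspace] by blast
qed

end

theorem proposition1p1:
  fixes V :: "'v::ab_group_add voa"
    and W0 :: "('v, 'a::ab_group_add) vmod" and W1 :: "('v, 'b::ab_group_add) vmod"
    and W2 :: "('v, 'c::ab_group_add) vmod" and W3 :: "('v, 'd::ab_group_add) vmod"
  assumes "is_VOA V"
    and "is_disc_module V W0" and "is_disc_module V W1"
    and "is_disc_module V W2" and "is_disc_module V W3"
    and "C1_cofinite V W0" and "C1_cofinite V W1"
    and "C1_cofinite V W2" and "C1_cofinite V W3"
  shows "\<exists>M::int.
     (\<forall>r::real. FT V W0 W1 W2 W3 r \<subseteq>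
        setplus (Jsp V W0 W1 W2 W3 \<inter> FT V W0 W1 W2 W3 r) (FT V W0 W1 W2 W3 (real_of_int M)))
     \<and> Tsp W0 W1 W2 W3 = setplus (Jsp V W0 W1 W2 W3) (FT V W0 W1 W2 W3 (real_of_int M))"
proof -
  interpret four_modules V W0 W1 W2 W3 using assms(1-5) by unfold_locales
  obtain M0 M1 M2 M3 :: real where
    "\<And>s. s > M0 \<Longrightarrow> Wgr V W0 s \<subseteq> C1_component V W0 s"
    "\<And>s. s > M1 \<Longrightarrow> Wgr V W1 s \<subseteq> C1_component V W1 s"
    "\<And>s. s > M2 \<Longrightarrow> Wgr V W2 s \<subseteq> C1_component V W2 s"
    "\<And>s. s > M3 \<Longrightarrow> Wgr V W3 s \<subseteq> C1_component V W3 s"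
    using C1_cofinite_high_weights[OF assms(1,2,6)] C1_cofinite_high_weights[OF assms(1,3,7)]
      C1_cofinite_high_weights[OF assms(1,4,8)] C1_cofinite_high_weights[OF assms(1,5,9)]
    by metis
  note high = this
  define M where "M = \<lceil>M0 + M1 + M2 + M3\<rceil>"
  have "M0 + M1 + M2 + M3 \<le> real_of_int M" unfolding M_def by linarith
  then have reducible: "FT_reducible M r" for r
    by (induction r rule: real_step_induct[of "real_of_int M"])
       (auto intro: FT_reducible_le FT_reducible_step[OF high])
  then show ?thesis
    using Tsp_eq_J_plus_FT[OF reducible] unfolding FT_reducible_def by blast
qed

end
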